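(* Let $\phi$ be a Drinfeld $A$-module over an arbitrary field $L$ of characteristic $p$, and let $v$ be a valuation on $L$ with residue field $\ell_v$ at which $\phi$ has good reduction $\phi_v$, with characteristic ideal $\mathfrak{p}_v\subset A$. Then the natural reduction homomorphism $\mathrm{End}_L(\phi)\to\mathrm{End}_{\ell_v}(\phi_v)$ is injective, and for every torsion element $x$ of its cokernel there is an integer $k\ge0$ with $\mathfrak{p}_v^kx=0$ (where $\mathfrak p_v^0=A$).
   Context: $A$ is an admissible coefficient ring; $L[\tau]$ is the twisted polynomial ring with $\tau x=x^p\tau$; a Drinfeld $A$-module over $L$ is a ring homomorphism $\phi\colon A\to L[\tau]$ with image not in $L$; $\mathrm{End}_L(\phi)$ is the centralizer of $\phi(A)$ in $L[\tau]$, an $A$-module via $\phi$. $\phi$ has good reduction at $v$ if, after conjugating by some $y\in L^\times$ (replacing $\phi_a$ by $y^{-1}\phi_ay$), all coefficients of all $\phi_a$ lie in the valuation ring of $v$ and for $a\neq0$ the leading coefficient of $\phi_a$ is a unit; $\phi_v$ is then the reduction of the coefficients to $\ell_v$, a Drinfeld $A$-module over $\ell_v$, and the reduction homomorphism sends an endomorphism (which then has coefficients in the valuation ring) to its coefficientwise reduction. The characteristic ideal of $\phi_v$ is the kernel of $a\mapsto$ constant coefficient of $\phi_{v,a}$. *)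

theory Defs
  imports "HOL-Computational_Algebra.Polynomial" "HOL-Computational_Algebra.Fraction_Field"
begin

definition prime_poly_subring :: "'a::comm_ring_1 \<Rightarrow> 'a set" where
  "prime_poly_subring t = {\<Sum>i<n. of_nat (c i) * t ^ i | n c. True}"

text \<open>A is an admissible coefficient ring: the ring of functions on a smooth projective
  geometrically irreducible curve over a finite field regular outside one closed point.
  Intrinsically: a normal integral domain of characteristic p, finitely generated of
  Krull dimension 1 over F_p (i.e. infinite and finite as a module over F_p[t] for some t),
  with finite unit group (equivalent to having exactly one place at infinity).\<close>
definition admissible_coeff_ring :: "'a::idom itself \<Rightarrow> bool" where
  "admissible_coeff_ring _ \<longleftrightarrow>
     prime CHAR('a) \<and> infinite (UNIV :: 'a set) \<and>
     (\<exists>t::'a. \<exists>bs::'a list. \<forall>a::'a. \<exists>q::nat \<Rightarrow> 'a.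
        (\<forall>j<length bs. q j \<in> prime_poly_subring t) \<and> a = (\<Sum>j<length bs. q j * bs ! j)) \<and>
     (\<forall>(f::'a poly) (a::'a) (b::'a). lead_coeff f = 1 \<and> b \<noteq> 0 \<and>
        poly (map_poly (\<lambda>c. Fract c 1) f) (Fract a b) = 0 \<longrightarrow> b dvd a) \<and>
     finite {u::'a. u dvd 1}"

text \<open>A twisted polynomial sum f_i tau^i is represented by the ordinary polynomial with the
  same coefficients; this is its twisted product.\<close>
definition tmult :: "nat \<Rightarrow> 'l::field poly \<Rightarrow> 'l poly \<Rightarrow> 'l poly" where
  "tmult p f g = (\<Sum>i\<le>degree f. monom (coeff f i) i * map_poly (\<lambda>c. c ^ (p ^ i)) g)"

definition drinfeld_module :: "nat \<Rightarrow> ('a::comm_ring_1 \<Rightarrow> 'l::field poly) \<Rightarrow> bool" where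
  "drinfeld_module p \<phi> \<longleftrightarrow>
     \<phi> 1 = 1 \<and> (\<forall>a b. \<phi> (a + b) = \<phi> a + \<phi> b) \<and>
     (\<forall>a b. \<phi> (a * b) = tmult p (\<phi> a) (\<phi> b)) \<and>
     (\<exists>a. degree (\<phi> a) > 0)"

definition End :: "nat \<Rightarrow> ('a \<Rightarrow> 'l::field poly) \<Rightarrow> 'l poly set" where
  "End p \<phi> = {f. \<forall>a. tmult p f (\<phi> a) = tmult p (\<phi> a) f}"

definition conj_tp :: "nat \<Rightarrow> 'l::field \<Rightarrow> 'l poly \<Rightarrow> 'l poly" where
  "conj_tp p y f = tmult p [:inverse y:] (tmult p f [:y:])"

definition valuation :: "('l::field \<Rightarrow> 'g::linordered_ab_group_add) \<Rightarrow> bool" where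
  "valuation v \<longleftrightarrow>
     (\<forall>x y. x \<noteq> 0 \<and> y \<noteq> 0 \<longrightarrow> v (x * y) = v x + v y) \<and>
     (\<forall>x y. x \<noteq> 0 \<and> y \<noteq> 0 \<and> x + y \<noteq> 0 \<longrightarrow> min (v x) (v y) \<le> v (x + y))"

definition val_ring :: "('l::field \<Rightarrow> 'g::linordered_ab_group_add) \<Rightarrow> 'l set" where
  "val_ring v = {x. x = 0 \<or> v x \<ge> 0}"

definition val_ideal :: "('l::field \<Rightarrow> 'g::linordered_ab_group_add) \<Rightarrow> 'l set" where
  "val_ideal v = {x. x = 0 \<or> v x > 0}"

text \<open>red is the residue map onto the residue field 'k: restricted to the valuation ring it is
  a surjective ring homomorphism with kernel the maximal ideal (so 'k is the residue field up to
  the induced isomorphism).\<close>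
definition residue_map :: "('l::field \<Rightarrow> 'g::linordered_ab_group_add) \<Rightarrow> ('l \<Rightarrow> 'k::field) \<Rightarrow> bool" where
  "residue_map v red \<longleftrightarrow>
     red 1 = 1 \<and>
     (\<forall>x\<in>val_ring v. \<forall>y\<in>val_ring v. red (x + y) = red x + red y \<and> red (x * y) = red x * red y) \<and>
     red ` val_ring v = UNIV \<and>
     (\<forall>x\<in>val_ring v. red x = 0 \<longleftrightarrow> x \<in> val_ideal v)"

definition in_val_ring_poly :: "('l::field \<Rightarrow> 'g::linordered_ab_group_add) \<Rightarrow> 'l poly \<Rightarrow> bool" where
  "in_val_ring_poly v f \<longleftrightarrow> (\<forall>i. coeff f i \<in> val_ring v)"

definition good_reduction_via ::
  "nat \<Rightarrow> ('a::comm_ring_1 \<Rightarrow> 'l::field poly) \<Rightarrow> ('l \<Rightarrow> 'g::linordered_ab_group_add) \<Rightarrow> 'l \<Rightarrow> bool" where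
  "good_reduction_via p \<phi> v y \<longleftrightarrow> y \<noteq> 0 \<and>
     (\<forall>a. in_val_ring_poly v (conj_tp p y (\<phi> a))) \<and>
     (\<forall>a. a \<noteq> 0 \<longrightarrow> lead_coeff (conj_tp p y (\<phi> a)) \<noteq> 0 \<and>
                     v (lead_coeff (conj_tp p y (\<phi> a))) = 0)"

definition reduce :: "nat \<Rightarrow> ('l::field \<Rightarrow> 'k::field) \<Rightarrow> 'l \<Rightarrow> 'l poly \<Rightarrow> 'k poly" where
  "reduce p red y f = map_poly red (conj_tp p y f)"

definition reduction :: "nat \<Rightarrow> ('l::field \<Rightarrow> 'k::field) \<Rightarrow> 'l \<Rightarrow> ('a \<Rightarrow> 'l poly) \<Rightarrow> 'a \<Rightarrow> 'k poly" where
  "reduction p red y \<phi> = (\<lambda>a. reduce p red y (\<phi> a))"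

definition char_ideal :: "('a::comm_ring_1 \<Rightarrow> 'k::field poly) \<Rightarrow> 'a set" where
  "char_ideal \<psi> = {a. coeff (\<psi> a) 0 = 0}"

fun ideal_pow :: "'a::comm_ring_1 set \<Rightarrow> nat \<Rightarrow> 'a set" where
  "ideal_pow I 0 = UNIV"
| "ideal_pow I (Suc k) =
     {\<Sum>n<m. x n * z n | (m::nat) x z. (\<forall>n<m. x n \<in> I \<and> z n \<in> ideal_pow I k)}"

end

theory Submission
  imports Defs "Jordan_Normal_Form.Char_Poly"
begin

text \<open>After conjugation by \<open>y\<close>, every \<open>\<psi>\<^sub>a = y\<^sup>-\<^sup>1 \<phi>\<^sub>a y\<close> has integral coefficients and, for
  \<open>a \<noteq> 0\<close>, a unit leading coefficient. Comparing the coefficients of \<open>f \<psi>\<^sub>a\<close> and \<open>\<psi>\<^sub>a f\<close> at the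
  right end of the lowest segment of the Newton polygon of \<open>f\<close> (with \<open>deg \<psi>\<^sub>a > 0\<close>) shows that an
  endomorphism is integral, and that it vanishes if it vanishes modulo the maximal ideal; this gives the
  reduction map and its injectivity.

  For the cokernel, if \<open>b \<notin> \<frak>p\<^sub>v\<close> then \<open>\<psi>\<^sub>b\<close> also has a unit constant term, and a division
  with remainder by \<open>\<psi>\<^sub>b\<close> shows that \<open>\<phi>\<^sub>v\<^sub>,\<^sub>b x\<close> in the image forces \<open>x\<close> in the image. Since
  \<open>A/aA\<close> is finite for \<open>a \<noteq> 0\<close> (\<open>A\<close> is finite over \<open>\<bbbF>\<^sub>p[t]\<close>), some \<open>\<beta> \<notin> \<frak>p\<^sub>v\<close> satisfies
  \<open>\<beta> \<frak>p\<^sub>v\<^sup>k \<subseteq> aA\<close>, so \<open>a x\<close> in the image forces \<open>\<frak>p\<^sub>v\<^sup>k x\<close> in the image.\<close>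

section \<open>Twisted polynomials\<close>

lemma coeff_tmult:
  assumes "p > 0"
  shows "coeff (tmult p f g) n = (\<Sum>i\<le>n. coeff f i * coeff g (n - i) ^ (p ^ i))"
proof -
  let ?t = "\<lambda>i. if n < i then 0 else coeff f i * coeff g (n - i) ^ (p ^ i)"
  have "coeff (tmult p f g) n = (\<Sum>i\<le>degree f. ?t i)"
    unfolding tmult_def coeff_sum coeff_monom_mult
    using assms by (intro sum.cong refl) (simp add: coeff_map_poly)
  also have "\<dots> = (\<Sum>i\<in>{..degree f} \<union> {..n}. ?t i)"
    by (rule sum.mono_neutral_left) (auto simp: coeff_eq_0)
  also have "\<dots> = (\<Sum>i\<le>n. ?t i)"
    by (rule sum.mono_neutral_right) (auto simp: coeff_eq_0)
  finally show ?thesis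
    by simp
qed

lemma coeff_0_tmult: "p > 0 \<Longrightarrow> coeff (tmult p f g) 0 = coeff f 0 * coeff g 0"
  by (simp add: coeff_tmult)

lemma tmult_add_left: "p > 0 \<Longrightarrow> tmult p (f + g) h = tmult p f h + tmult p g h"
  by (rule poly_eqI) (simp add: coeff_tmult sum.distrib distrib_right)

lemma tmult_diff_left: "p > 0 \<Longrightarrow> tmult p (f - g) h = tmult p f h - tmult p g h"
  by (rule poly_eqI) (simp add: coeff_tmult sum_subtractf left_diff_distrib)

lemma tmult_0_left [simp]: "p > 0 \<Longrightarrow> tmult p 0 h = 0"
  by (rule poly_eqI) (simp add: coeff_tmult)

lemma tmult_0_right [simp]: "p > 0 \<Longrightarrow> tmult p h 0 = 0"
  by (rule poly_eqI) (simp add: coeff_tmult zero_power)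

text \<open>Additivity in the right argument is where the characteristic enters: \<open>\<tau>\<close> is additive
  because the Frobenius is.\<close>

lemma tmult_add_right:
  assumes "CHAR('f::field) = p" "prime p"
  shows "tmult p (h::'f poly) (f + g) = tmult p h f + tmult p h g"
  using assms prime_gt_0_nat[of p]
  by (intro poly_eqI) (simp add: coeff_tmult freshmans_dream' sum.distrib distrib_left)

lemma tmult_diff_right:
  assumes "CHAR('f::field) = p" "prime p"
  shows "tmult p (h::'f poly) (f - g) = tmult p h f - tmult p h g"
  using tmult_add_right[OF assms, of h "f - g" g] by (simp add: eq_diff_eq)

lemma tmult_assoc:
  assumes "CHAR('f::field) = p" "prime p"
  shows "tmult p (tmult p (f::'f poly) g) h = tmult p f (tmult p g h)"
proof (rule poly_eqI)
  fix n
  have p: "p > 0"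
    using assms(2) prime_gt_0_nat by blast
  define F where "F a b = coeff f a * coeff g b ^ (p ^ a) * coeff h (n - a - b) ^ (p ^ (a + b))"
    for a b
  have "coeff (tmult p (tmult p f g) h) n
      = (\<Sum>k\<le>n. (\<Sum>a\<le>k. coeff f a * coeff g (k - a) ^ (p ^ a)) * coeff h (n - k) ^ (p ^ k))"
    by (simp add: coeff_tmult[OF p])
  also have "\<dots> = (\<Sum>k\<le>n. \<Sum>a\<le>k. F a (k - a))"
    by (rule sum.cong[OF refl]) (simp add: sum_distrib_right F_def)
  also have "\<dots> = (\<Sum>(a, b)\<in>{(a, b). a + b \<le> n}. F a b)"
    by (rule sum.triangle_reindex_eq[symmetric])
  also have "{(a, b). a + b \<le> n} = Sigma {..n} (\<lambda>a. {..n - a})"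
    by auto
  also have "(\<Sum>(a, b)\<in>Sigma {..n} (\<lambda>a. {..n - a}). F a b) = (\<Sum>a\<le>n. \<Sum>b\<le>n - a. F a b)"
    by (rule sum.Sigma[symmetric]) auto
  also have "\<dots> = coeff (tmult p f (tmult p g h)) n"
    using assms
    by (simp add: coeff_tmult[OF p] F_def freshmans_dream_sum' sum_distrib_left power_mult_distrib
        flip: power_mult power_add mult.assoc) (simp add: add.commute)
  finally show "coeff (tmult p (tmult p f g) h) n = coeff (tmult p f (tmult p g h)) n" .
qed

lemma coeff_tmult_degree_sum:
  assumes "p > 0"
  shows "coeff (tmult p f g) (degree f + degree g) = lead_coeff f * lead_coeff g ^ (p ^ degree f)"
    and "degree (tmult p f g) \<le> degree f + degree g"
proof -
  have vanish: "coeff f i * coeff g (n - i) ^ p ^ i = 0"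
    if "n \<ge> degree f + degree g" "i \<le> n" "i \<noteq> degree f \<or> n \<noteq> degree f + degree g" for i n
  proof -
    have "i > degree f \<or> n - i > degree g"
      using that by auto
    then show ?thesis
      using assms by (auto simp: coeff_eq_0 zero_power)
  qed
  show "coeff (tmult p f g) (degree f + degree g) = lead_coeff f * lead_coeff g ^ (p ^ degree f)"
    unfolding coeff_tmult[OF assms]
    by (subst sum.remove[of _ "degree f"]) (auto intro!: sum.neutral vanish)
  show "degree (tmult p f g) \<le> degree f + degree g"
    by (rule degree_le) (auto simp: coeff_tmult[OF assms] intro!: sum.neutral vanish)
qed

lemma
  assumes "p > 0" and "(f::'f::field poly) \<noteq> 0" and "g \<noteq> 0"
  shows tmult_nonzero: "tmult p f g \<noteq> 0"
    and degree_tmult: "degree (tmult p f g) = degree f + degree g"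
proof -
  have "coeff (tmult p f g) (degree f + degree g) \<noteq> 0"
    using assms by (simp add: coeff_tmult_degree_sum)
  then show "tmult p f g \<noteq> 0" "degree (tmult p f g) = degree f + degree g"
    using coeff_tmult_degree_sum(2)[OF assms(1), of f g] le_degree[of "tmult p f g"]
    by (auto intro: antisym)
qed

lemma tmult_eq_0_iff: "p > 0 \<Longrightarrow> tmult p (f::'f::field poly) g = 0 \<longleftrightarrow> f = 0 \<or> g = 0"
  using tmult_nonzero by auto

lemma tmult_right_cancel:
  assumes "p > 0" and "(h::'f::field poly) \<noteq> 0" and "tmult p f h = tmult p g h"
  shows "f = g"
  using assms tmult_eq_0_iff[OF assms(1), of "f - g" h] by (simp add: tmult_diff_left)

lemma tmult_division_unique:
  fixes B :: "'f::field poly"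
  assumes "p > 0" and "B \<noteq> 0" and eq: "tmult p q B + r = tmult p q' B + r'"
    and "r = 0 \<or> degree r < degree B" and "r' = 0 \<or> degree r' < degree B"
  shows "q = q'"
proof (rule ccontr)
  assume "q \<noteq> q'"
  then have "tmult p (q - q') B \<noteq> 0" and "degree (tmult p (q - q') B) \<ge> degree B"
    using assms(1,2) by (simp_all add: tmult_nonzero degree_tmult)
  moreover have "tmult p (q - q') B = r' - r"
    using eq by (simp add: tmult_diff_left[OF assms(1)] algebra_simps)
  moreover have "r' - r = 0 \<or> degree (r' - r) < degree B"
    using assms(4,5) degree_diff_le_max[of r' r] by auto
  ultimately show False
    by auto
qed

lemma coeff_conj_tp:
  assumes "p > 0"
  shows "coeff (conj_tp p y f) n = inverse y * coeff f n * y ^ (p ^ n)"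
proof -
  have left: "coeff (tmult p [:z:] g) m = z * coeff g m" for z and g :: "'a poly" and m
    unfolding coeff_tmult[OF assms] by (simp add: coeff_pCons sum.atMost_shift split: nat.split)
  have right: "coeff (tmult p g [:z:]) m = coeff g m * z ^ (p ^ m)" for z and g :: "'a poly" and m
    unfolding coeff_tmult[OF assms]
    by (subst sum.remove[of _ m]) (auto intro!: sum.neutral simp: coeff_pCons zero_power assms split: nat.splits)
  show ?thesis
    unfolding conj_tp_def by (simp add: left right)
qed

lemma conj_tp_add: "p > 0 \<Longrightarrow> conj_tp p y (f + g) = conj_tp p y f + conj_tp p y g"
  by (rule poly_eqI) (simp add: coeff_conj_tp algebra_simps)

lemma conj_tp_1:
  assumes "p > 0" and "(y::'f::field) \<noteq> 0"
  shows "conj_tp p y 1 = 1"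
proof (rule poly_eqI)
  fix n
  show "coeff (conj_tp p y 1) n = coeff 1 n"
    using assms by (cases n) (simp_all add: coeff_conj_tp)
qed

lemma conj_tp_inverse_conj_tp:
  assumes "p > 0" and "(y::'f::field) \<noteq> 0"
  shows "conj_tp p (inverse y) (conj_tp p y f) = f"
  using assms by (intro poly_eqI) (simp add: coeff_conj_tp field_simps flip: power_mult_distrib)

lemma conj_tp_conj_tp_inverse:
  assumes "p > 0" and "(y::'f::field) \<noteq> 0"
  shows "conj_tp p y (conj_tp p (inverse y) f) = f"
  using conj_tp_inverse_conj_tp[of p "inverse y" f] assms by simp

lemma conj_tp_inj:
  "p > 0 \<Longrightarrow> (y::'f::field) \<noteq> 0 \<Longrightarrow> conj_tp p y f = conj_tp p y g \<longleftrightarrow> f = g"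
  by (metis conj_tp_inverse_conj_tp)

lemma conj_tp_tmult:
  assumes "CHAR('f::field) = p" "prime p" and "(y::'f) \<noteq> 0"
  shows "conj_tp p y (tmult p f g) = tmult p (conj_tp p y f) (conj_tp p y g)"
proof (rule poly_eqI)
  fix n
  have p: "p > 0"
    using assms(2) prime_gt_0_nat by blast
  have split: "inverse y * (coeff f i * coeff g (n - i) ^ p ^ i) * y ^ p ^ n
      = inverse y * coeff f i * y ^ p ^ i * (inverse y * coeff g (n - i) * y ^ p ^ (n - i)) ^ p ^ i"
    if "i \<le> n" for i
  proof -
    have "(y ^ p ^ (n - i)) ^ p ^ i = y ^ p ^ n"
      using that by (simp flip: power_mult power_add)
    moreover have "y ^ p ^ i * inverse y ^ p ^ i = 1"
      using assms(3) by (simp flip: power_mult_distrib)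
    ultimately show ?thesis
      by (simp add: power_mult_distrib)
  qed
  show "coeff (conj_tp p y (tmult p f g)) n = coeff (tmult p (conj_tp p y f) (conj_tp p y g)) n"
    by (simp add: coeff_conj_tp[OF p] coeff_tmult[OF p] sum_distrib_left sum_distrib_right split)
qed

lemma degree_conj_tp:
  assumes "p > 0" and "(y::'f::field) \<noteq> 0"
  shows "degree (conj_tp p y f) = degree f"
proof -
  have "coeff (conj_tp p y f) n = 0 \<longleftrightarrow> coeff f n = 0" for n
    using assms by (simp add: coeff_conj_tp)
  then show ?thesis
    by (intro antisym degree_le le_degree) (auto dest: coeff_eq_0)
qed

lemma tmult_mem_End:
  assumes "CHAR('f::field) = p" "prime p" and "f \<in> End p \<phi>" "g \<in> End p (\<phi> :: 'a \<Rightarrow> 'f poly)"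
  shows "tmult p f g \<in> End p \<phi>"
  unfolding End_def
proof (intro CollectI allI)
  fix a
  have f: "tmult p f (\<phi> a) = tmult p (\<phi> a) f" and g: "tmult p g (\<phi> a) = tmult p (\<phi> a) g"
    using assms(3,4) by (simp_all add: End_def)
  have "tmult p (tmult p f g) (\<phi> a) = tmult p f (tmult p (\<phi> a) g)"
    by (simp add: tmult_assoc[OF assms(1,2)] g)
  also have "\<dots> = tmult p (\<phi> a) (tmult p f g)"
    by (simp add: f flip: tmult_assoc[OF assms(1,2)])
  finally show "tmult p (tmult p f g) (\<phi> a) = tmult p (\<phi> a) (tmult p f g)" .
qed

lemma tmult_commute_cancel_right:
  fixes B C q :: "'f::field poly"
  assumes "CHAR('f) = p" "prime p" and "B \<noteq> 0" and "tmult p B C = tmult p C B"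
    and "tmult p (tmult p q B) C = tmult p C (tmult p q B)"
  shows "tmult p q C = tmult p C q"
proof -
  have "tmult p (tmult p q C) B = tmult p (tmult p q B) C"
    using assms(4) by (simp add: tmult_assoc[OF assms(1,2)])
  also have "\<dots> = tmult p (tmult p C q) B"
    using assms(5) by (simp add: tmult_assoc[OF assms(1,2)])
  finally show ?thesis
    using tmult_right_cancel[OF _ assms(3)] prime_gt_0_nat[OF assms(2)] by blast
qed

section \<open>Valuations\<close>

fun nat_times :: "nat \<Rightarrow> 'g::monoid_add \<Rightarrow> 'g" where
  "nat_times 0 g = 0"
| "nat_times (Suc n) g = g + nat_times n g"

lemma nat_times_add: "nat_times (m + n) g = nat_times m g + nat_times n g"
  by (induct m) (simp_all add: add.assoc)

lemma nat_times_0_right [simp]: "nat_times n (0::'g::monoid_add) = 0"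
  by (induct n) simp_all

lemma nat_times_nonneg: "(g::'g::ordered_comm_monoid_add) \<ge> 0 \<Longrightarrow> nat_times n g \<ge> 0"
  by (induct n) simp_all

lemma nat_times_nonpos: "(g::'g::ordered_comm_monoid_add) \<le> 0 \<Longrightarrow> nat_times n g \<le> 0"
  by (induct n) (simp_all add: add_nonpos_nonpos)

lemma nat_times_strict_mono:
  "(g::'g::ordered_cancel_comm_monoid_add) < h \<Longrightarrow> n > 0 \<Longrightarrow> nat_times n g < nat_times n h"
proof (induct n)
  case (Suc n)
  have "nat_times n g \<le> nat_times n h"
    using Suc.prems(1) by (induct n) (simp_all add: add_mono)
  then show ?case
    using Suc by (cases n) (auto intro: add_less_le_mono)
qed simp

lemma nat_times_le_nat_times_nonneg:
  "(g::'g::ordered_comm_monoid_add) \<ge> 0 \<Longrightarrow> m \<le> n \<Longrightarrow> nat_times m g \<le> nat_times n g"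
  using nat_times_add[of m "n - m" g] nat_times_nonneg[of g "n - m"] add_left_mono by fastforce

lemma nat_times_le_nat_times_nonpos:
  "(g::'g::ordered_comm_monoid_add) \<le> 0 \<Longrightarrow> m \<le> n \<Longrightarrow> nat_times n g \<le> nat_times m g"
  using nat_times_add[of m "n - m" g] nat_times_nonpos[of g "n - m"] add_left_mono by fastforce

lemma nat_times_ge_double:
  assumes "(g::'g::ordered_comm_monoid_add) \<ge> 0" and "n \<ge> 2"
  shows "g + g \<le> nat_times n g"
  using nat_times_le_nat_times_nonneg[OF assms] by (simp add: numeral_2_eq_2)

lemma nat_times_lt_self:
  assumes "(g::'g::linordered_ab_group_add) < 0" and "n \<ge> 2"
  shows "nat_times n g < g"
proof -
  have "nat_times n g \<le> nat_times 2 g"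
    using nat_times_le_nat_times_nonpos[of g 2 n] assms by simp
  also have "\<dots> < g"
    using assms(1) by (simp add: numeral_2_eq_2)
  finally show ?thesis .
qed

lemma nat_times_power_less:
  fixes x \<mu> :: "'g::linordered_ab_group_add"
  assumes "\<mu> < x" "\<mu> < 0" "i < d" "p \<ge> 2"
  shows "nat_times (p ^ d) \<mu> < nat_times (p ^ i) x"
proof (cases "x \<ge> 0")
  case True
  have "nat_times (p ^ d) \<mu> < nat_times (p ^ d) 0"
    using assms by (intro nat_times_strict_mono) simp_all
  then show ?thesis
    using nat_times_nonneg[OF True, of "p ^ i"] by simp
next
  case False
  have "nat_times (p ^ d) \<mu> < nat_times (p ^ d) x"
    using assms by (intro nat_times_strict_mono) simp_all
  also have "\<dots> \<le> nat_times (p ^ i) x"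
    using False assms by (intro nat_times_le_nat_times_nonpos power_increasing) simp_all
  finally show ?thesis .
qed

definition in_val_ideal_poly :: "('l::field \<Rightarrow> 'g::linordered_ab_group_add) \<Rightarrow> 'l poly \<Rightarrow> bool" where
  "in_val_ideal_poly v f \<longleftrightarrow> (\<forall>i. coeff f i \<in> val_ideal v)"

text \<open>The right end of the lowest segment of the Newton polygon of \<open>f\<close>.\<close>

definition is_last_min_coeff :: "('l::zero \<Rightarrow> 'g::linorder) \<Rightarrow> 'l poly \<Rightarrow> nat \<Rightarrow> bool" where
  "is_last_min_coeff v f J \<longleftrightarrow> coeff f J \<noteq> 0 \<and>
     (\<forall>k. coeff f k \<noteq> 0 \<longrightarrow> v (coeff f J) \<le> v (coeff f k)) \<and>
     (\<forall>k>J. coeff f k \<noteq> 0 \<longrightarrow> v (coeff f J) < v (coeff f k))"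

lemma is_last_min_coeff_exists:
  assumes "f \<noteq> 0"
  shows "\<exists>J. is_last_min_coeff v f J"
proof -
  define S where "S = {i. coeff f i \<noteq> 0}"
  have "degree f \<in> S"
    using assms by (simp add: S_def)
  moreover have "S \<subseteq> {..degree f}"
    using le_degree[of f] by (auto simp: S_def)
  ultimately have S: "finite S" "S \<noteq> {}"
    using finite_subset by auto
  define m where "m = Min ((\<lambda>i. v (coeff f i)) ` S)"
  define T where "T = {k \<in> S. v (coeff f k) = m}"
  have "m \<in> (\<lambda>i. v (coeff f i)) ` S"
    unfolding m_def using S by (intro Min_in) auto
  then have T: "finite T" "T \<noteq> {}"
    unfolding T_def using S(1) by auto
  define J where "J = Max T"
  have J: "J \<in> T"
    unfolding J_def using T by simp
  have le: "m \<le> v (coeff f k)" if "k \<in> S" for k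
    unfolding m_def using S(1) that by simp
  have "v (coeff f J) < v (coeff f k)" if "k \<in> S" "J < k" for k
  proof -
    have "k \<notin> T"
      using that(2) T Max_ge[of T k] by (auto simp: J_def)
    then show ?thesis
      using J le[OF that(1)] that(1) by (auto simp: T_def)
  qed
  then have "is_last_min_coeff v f J"
    using J le by (auto simp: is_last_min_coeff_def T_def S_def)
  then show ?thesis
    by blast
qed

locale valued_field =
  fixes v :: "'l::field \<Rightarrow> 'g::linordered_ab_group_add"
  assumes valuation: "valuation v"
begin

lemma v_mult: "x \<noteq> 0 \<Longrightarrow> y \<noteq> 0 \<Longrightarrow> v (x * y) = v x + v y"
  using valuation unfolding valuation_def by blast

lemma v_add: "x \<noteq> 0 \<Longrightarrow> y \<noteq> 0 \<Longrightarrow> x + y \<noteq> 0 \<Longrightarrow> min (v x) (v y) \<le> v (x + y)"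
  using valuation unfolding valuation_def by blast

lemma v_1 [simp]: "v 1 = 0"
  using v_mult[of 1 1] by simp

lemma v_uminus [simp]: "v (- x) = v x"
proof -
  have "v (- 1) + v (- 1) = 0"
    using v_mult[of "- 1" "- 1"] by simp
  then have "v (- 1) = 0"
    using add_pos_pos[of "v (- 1)"] add_neg_neg[of "v (- 1)"] by (cases "v (- 1)" "0 :: 'g" rule: linorder_cases) auto
  then show ?thesis
    using v_mult[of "- 1" x] by (cases "x = 0") simp_all
qed

lemma v_power: "x \<noteq> 0 \<Longrightarrow> v (x ^ n) = nat_times n (v x)"
  by (induct n) (simp_all add: v_mult)

lemma v_inverse: "x \<noteq> 0 \<Longrightarrow> v (inverse x) = - v x"
  using v_mult[of x "inverse x"] by (simp add: eq_neg_iff_add_eq_0 add.commute)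

lemma v_add_ge:
  assumes "x = 0 \<or> c \<le> v x" and "y = 0 \<or> c \<le> v y"
  shows "x + y = 0 \<or> c \<le> v (x + y)"
proof (cases "x = 0 \<or> y = 0 \<or> x + y = 0")
  case False
  then have "min (v x) (v y) \<le> v (x + y)"
    using v_add by blast
  then show ?thesis
    using assms False by (auto simp: min_def split: if_splits)
qed (use assms in auto)

lemma v_add_gt:
  assumes "x = 0 \<or> c < v x" and "y = 0 \<or> c < v y"
  shows "x + y = 0 \<or> c < v (x + y)"
proof (cases "x = 0 \<or> y = 0 \<or> x + y = 0")
  case False
  then have "min (v x) (v y) \<le> v (x + y)"
    using v_add by blast
  then show ?thesis
    using assms False by (auto simp: min_def split: if_splits)
qed (use assms in auto)

lemma v_sum_ge:
  "(\<And>i. i \<in> I \<Longrightarrow> t i = 0 \<or> c \<le> v (t i)) \<Longrightarrow> sum t I = 0 \<or> c \<le> v (sum t I)"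
  by (induct I rule: infinite_finite_induct) (simp_all add: v_add_ge)

lemma v_sum_gt:
  "(\<And>i. i \<in> I \<Longrightarrow> t i = 0 \<or> c < v (t i)) \<Longrightarrow> sum t I = 0 \<or> c < v (sum t I)"
  by (induct I rule: infinite_finite_induct) (simp_all add: v_add_gt)

lemma v_add_dominant:
  assumes "x \<noteq> 0" and "r = 0 \<or> v x < v r"
  shows "x + r \<noteq> 0 \<and> v (x + r) = v x"
proof (cases "r = 0")
  case False
  then have vr: "v x < v r"
    using assms(2) by simp
  then have nz: "x + r \<noteq> 0"
    by (metis add.commute add_eq_0_iff less_irrefl v_uminus)
  have "v x \<le> v (x + r)"
    using v_add[OF assms(1) False nz] vr by simp
  moreover have "v (x + r) \<le> v x"
    using v_add[OF nz, of "- r"] assms(1) False vr by (auto simp: min_def split: if_splits)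
  ultimately show ?thesis
    using nz by simp
qed (use assms(1) in simp)

lemma v_sum_dominant:
  assumes "finite I" "j \<in> I" "t j \<noteq> 0" "\<And>i. i \<in> I \<Longrightarrow> i \<noteq> j \<Longrightarrow> t i = 0 \<or> v (t j) < v (t i)"
  shows "sum t I \<noteq> 0 \<and> v (sum t I) = v (t j)"
proof -
  have "sum t (I - {j}) = 0 \<or> v (t j) < v (sum t (I - {j}))"
    by (rule v_sum_gt) (use assms in auto)
  then show ?thesis
    using v_add_dominant[OF assms(3)] assms(1,2) by (simp add: sum.remove)
qed

lemma val_ring_iff: "x \<in> val_ring v \<longleftrightarrow> x = 0 \<or> 0 \<le> v x"
  by (simp add: val_ring_def)

lemma val_ideal_iff: "x \<in> val_ideal v \<longleftrightarrow> x = 0 \<or> 0 < v x"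
  by (simp add: val_ideal_def)

lemma val_unit_iff: "x \<in> val_ring v \<and> x \<notin> val_ideal v \<longleftrightarrow> x \<noteq> 0 \<and> v x = 0"
  by (auto simp: val_ring_iff val_ideal_iff)

lemma val_ring_0 [simp]: "0 \<in> val_ring v"
  and val_ring_1 [simp]: "1 \<in> val_ring v"
  and val_ideal_0 [simp]: "0 \<in> val_ideal v"
  by (simp_all add: val_ring_iff val_ideal_iff)

lemma val_ring_add: "x \<in> val_ring v \<Longrightarrow> y \<in> val_ring v \<Longrightarrow> x + y \<in> val_ring v"
  using v_add_ge[of x 0 y] by (simp add: val_ring_iff)

lemma val_ring_mult:
  assumes "x \<in> val_ring v" and "y \<in> val_ring v"
  shows "x * y \<in> val_ring v"
proof (cases "x = 0 \<or> y = 0")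
  case False
  then show ?thesis
    using assms v_mult[of x y] by (simp add: val_ring_iff)
qed auto

lemma val_ring_uminus: "x \<in> val_ring v \<Longrightarrow> - x \<in> val_ring v"
  by (simp add: val_ring_iff)

lemma val_ring_diff: "x \<in> val_ring v \<Longrightarrow> y \<in> val_ring v \<Longrightarrow> x - y \<in> val_ring v"
  using val_ring_add[of x "- y"] by (simp add: val_ring_uminus)

lemma val_ring_sum: "(\<And>i. i \<in> I \<Longrightarrow> t i \<in> val_ring v) \<Longrightarrow> sum t I \<in> val_ring v"
  by (induct I rule: infinite_finite_induct) (auto intro: val_ring_add)

lemma val_ring_power: "x \<in> val_ring v \<Longrightarrow> x ^ n \<in> val_ring v"
  by (induct n) (simp_all add: val_ring_mult)

lemma val_ideal_subset: "x \<in> val_ideal v \<Longrightarrow> x \<in> val_ring v"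
  by (auto simp: val_ring_iff val_ideal_iff)

lemma v_mult_val_ring_ge: "x \<noteq> 0 \<Longrightarrow> y \<in> val_ring v \<Longrightarrow> y \<noteq> 0 \<Longrightarrow> v x \<le> v (x * y)"
  using v_mult[of x y] by (simp add: val_ring_iff)

lemma in_val_ring_poly_coeff: "in_val_ring_poly v f \<Longrightarrow> coeff f i \<in> val_ring v"
  by (simp add: in_val_ring_poly_def)

lemma in_val_ring_poly_add: "in_val_ring_poly v f \<Longrightarrow> in_val_ring_poly v g \<Longrightarrow> in_val_ring_poly v (f + g)"
  by (simp add: in_val_ring_poly_def val_ring_add)

lemma in_val_ring_poly_diff: "in_val_ring_poly v f \<Longrightarrow> in_val_ring_poly v g \<Longrightarrow> in_val_ring_poly v (f - g)"
  by (simp add: in_val_ring_poly_def val_ring_diff)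

lemma in_val_ring_poly_0 [simp]: "in_val_ring_poly v 0"
  by (simp add: in_val_ring_poly_def)

lemma in_val_ring_poly_monom: "c \<in> val_ring v \<Longrightarrow> in_val_ring_poly v (monom c m)"
  by (simp add: in_val_ring_poly_def coeff_monom)

lemma in_val_ring_poly_tmult:
  "p > 0 \<Longrightarrow> in_val_ring_poly v f \<Longrightarrow> in_val_ring_poly v g \<Longrightarrow> in_val_ring_poly v (tmult p f g)"
  by (simp add: in_val_ring_poly_def coeff_tmult val_ring_sum val_ring_mult val_ring_power)

lemma v_mult_power_ge:
  assumes "c \<in> val_ring v" "c \<noteq> 0" "x \<noteq> 0"
  shows "nat_times n (v x) \<le> v (c * x ^ n)"
  using assms v_mult[of c "x ^ n"] by (simp add: val_ring_iff v_power)

lemma v_coeff_tmult_ge: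
  assumes "p > 0" and "in_val_ring_poly v g"
    and bound: "\<And>k. coeff f k \<noteq> 0 \<Longrightarrow> c \<le> v (coeff f k)"
  shows "coeff (tmult p f g) n = 0 \<or> c \<le> v (coeff (tmult p f g) n)"
  unfolding coeff_tmult[OF assms(1)]
proof (rule v_sum_ge)
  fix i
  show "coeff f i * coeff g (n - i) ^ p ^ i = 0 \<or> c \<le> v (coeff f i * coeff g (n - i) ^ p ^ i)"
  proof (cases "coeff f i * coeff g (n - i) ^ p ^ i = 0")
    case False
    then have "v (coeff f i) \<le> v (coeff f i * coeff g (n - i) ^ p ^ i)"
      using assms(2) by (intro v_mult_val_ring_ge val_ring_power in_val_ring_poly_coeff) auto
    then show ?thesis
      using bound[of i] False by auto
  qed simp
qed

text \<open>The dominant term is \<open>f\<^sub>J lc(B)^(p^J)\<close>.\<close>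

lemma v_coeff_tmult_right_lead:
  assumes "p > 0" and B: "in_val_ring_poly v B" "lead_coeff B \<noteq> 0" "v (lead_coeff B) = 0"
    and J: "is_last_min_coeff v f J"
  shows "coeff (tmult p f B) (J + degree B) \<noteq> 0 \<and>
    v (coeff (tmult p f B) (J + degree B)) = v (coeff f J)"
proof -
  define t where "t i = coeff f i * coeff B (J + degree B - i) ^ p ^ i" for i
  have lead: "t J \<noteq> 0" "v (t J) = v (coeff f J)"
    using B J v_mult v_power by (auto simp: t_def is_last_min_coeff_def)
  have "t i = 0 \<or> v (t J) < v (t i)" if "i \<noteq> J" for i
  proof (cases "t i = 0")
    case False
    then have nz: "coeff f i \<noteq> 0" "coeff B (J + degree B - i) \<noteq> 0"
      using assms(1) by (auto simp: t_def)
    then have "J < i"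
      using that le_degree[of B "J + degree B - i"] by linarith
    then have "v (t J) < v (coeff f i)"
      using J nz(1) lead(2) by (simp add: is_last_min_coeff_def)
    also have "\<dots> \<le> v (t i)"
      unfolding t_def using nz B(1) by (intro v_mult_val_ring_ge val_ring_power in_val_ring_poly_coeff) auto
    finally show ?thesis
      by simp
  qed simp
  then have "(\<Sum>i\<le>J + degree B. t i) \<noteq> 0 \<and> v (\<Sum>i\<le>J + degree B. t i) = v (t J)"
    using lead by (intro v_sum_dominant) auto
  then show ?thesis
    using lead(2) assms(1) by (simp add: coeff_tmult t_def)
qed

text \<open>The dominant term is \<open>lc(B) g\<^sub>J^(p^d)\<close> with \<open>d = deg B\<close>: as \<open>v(g\<^sub>J) < 0\<close>, the
  largest Frobenius power wins.\<close>

lemma v_coeff_tmult_left_lead: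
  assumes "p \<ge> 2" and B: "in_val_ring_poly v B" "degree B \<ge> 1" "v (lead_coeff B) = 0"
    and J: "is_last_min_coeff v g J" and neg: "v (coeff g J) < 0"
  shows "coeff (tmult p B g) (J + degree B) \<noteq> 0 \<and>
    v (coeff (tmult p B g) (J + degree B)) = nat_times (p ^ degree B) (v (coeff g J))"
proof -
  define d where "d = degree B"
  define t where "t i = coeff B i * coeff g (J + d - i) ^ p ^ i" for i
  have lcB: "coeff B d \<noteq> 0"
    using B(2) by (auto simp: d_def)
  have lead: "t d \<noteq> 0" "v (t d) = nat_times (p ^ d) (v (coeff g J))"
    using lcB B(3) J v_mult v_power by (auto simp: t_def d_def is_last_min_coeff_def)
  have "t i = 0 \<or> v (t d) < v (t i)" if "i \<le> J + d" "i \<noteq> d" for i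
  proof (cases "t i = 0")
    case False
    then have nz: "coeff B i \<noteq> 0" "coeff g (J + d - i) \<noteq> 0"
      using assms(1) by (auto simp: t_def)
    then have "i < d"
      using that(2) le_degree[of B i] by (simp add: d_def)
    moreover have "v (coeff g J) < v (coeff g (J + d - i))"
      using J nz(2) \<open>i < d\<close> by (simp add: is_last_min_coeff_def)
    ultimately have "v (t d) < nat_times (p ^ i) (v (coeff g (J + d - i)))"
      unfolding lead(2) using neg assms(1) by (intro nat_times_power_less)
    also have "\<dots> \<le> v (t i)"
      unfolding t_def using nz B(1) by (intro v_mult_power_ge in_val_ring_poly_coeff)
    finally show ?thesis
      by simp
  qed simp
  then have "(\<Sum>i\<le>J + d. t i) \<noteq> 0 \<and> v (\<Sum>i\<le>J + d. t i) = v (t d)"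
    using lead by (intro v_sum_dominant) auto
  then show ?thesis
    using lead(2) assms(1) by (simp add: coeff_tmult t_def d_def)
qed

text \<open>Every term of \<open>(B h)\<^sub>n\<close> other than \<open>B\<^sub>0 h\<^sub>n\<close> contains a \<open>p\<close>-th power of a coefficient
  of \<open>h\<close>.\<close>

lemma v_coeff_tmult_tail_ge:
  fixes B h :: "'l poly" and n :: nat
  assumes "p \<ge> 2" and "in_val_ring_poly v B" and "0 \<le> \<mu>"
    and bound: "\<And>k. coeff h k \<noteq> 0 \<Longrightarrow> \<mu> \<le> v (coeff h k)"
  defines "tail \<equiv> coeff (tmult p B h) n - coeff B 0 * coeff h n"
  shows "tail = 0 \<or> \<mu> + \<mu> \<le> v tail"
proof -
  have "tail = (\<Sum>i\<in>{1..n}. coeff B i * coeff h (n - i) ^ p ^ i)"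
    using assms(1) by (simp add: tail_def coeff_tmult atMost_atLeast0 sum.atLeast_Suc_atMost)
  also have "\<dots> = 0 \<or> \<mu> + \<mu> \<le> v \<dots>"
  proof (rule v_sum_ge)
    fix i assume i: "i \<in> {1..n}"
    show "coeff B i * coeff h (n - i) ^ p ^ i = 0 \<or> \<mu> + \<mu> \<le> v (coeff B i * coeff h (n - i) ^ p ^ i)"
    proof (cases "coeff B i * coeff h (n - i) ^ p ^ i = 0")
      case False
      then have nz: "coeff B i \<noteq> 0" "coeff h (n - i) \<noteq> 0"
        using assms(1) by auto
      have "p ^ 1 \<le> p ^ i"
        using i assms(1) by (intro power_increasing) auto
      then have "\<mu> + \<mu> \<le> nat_times (p ^ i) (v (coeff h (n - i)))"
        using bound[OF nz(2)] assms(1,3)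
        by (intro order_trans[OF add_mono nat_times_ge_double]) auto
      also have "\<dots> \<le> v (coeff B i * coeff h (n - i) ^ p ^ i)"
        using nz assms(2) by (intro v_mult_power_ge in_val_ring_poly_coeff)
      finally show ?thesis
        by simp
    qed simp
  qed
  finally show ?thesis .
qed

lemma in_val_ring_poly_if_commutes:
  assumes "p \<ge> 2" and B: "in_val_ring_poly v B" "degree B \<ge> 1" "v (lead_coeff B) = 0"
    and comm: "tmult p g B = tmult p B g"
  shows "in_val_ring_poly v g"
proof (rule ccontr)
  assume "\<not> in_val_ring_poly v g"
  then obtain i where i: "coeff g i \<noteq> 0" "v (coeff g i) < 0"
    by (auto simp: in_val_ring_poly_def val_ring_iff)
  then have "g \<noteq> 0"
    by auto
  then obtain J where J: "is_last_min_coeff v g J"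
    using is_last_min_coeff_exists by blast
  define \<mu> where "\<mu> = v (coeff g J)"
  have "\<mu> < 0"
    using J i by (auto simp: is_last_min_coeff_def \<mu>_def intro: le_less_trans)
  define n where "n = J + degree B"
  have left: "coeff (tmult p B g) n \<noteq> 0" "v (coeff (tmult p B g) n) = nat_times (p ^ degree B) \<mu>"
    using v_coeff_tmult_left_lead[OF assms(1) B J] \<open>\<mu> < 0\<close> by (simp_all add: n_def \<mu>_def)
  have "coeff (tmult p g B) n = 0 \<or> \<mu> \<le> v (coeff (tmult p g B) n)"
    using assms(1) B(1) J by (intro v_coeff_tmult_ge) (auto simp: is_last_min_coeff_def \<mu>_def)
  moreover have "p ^ 1 \<le> p ^ degree B"
    using assms(1) B(2) by (intro power_increasing) auto
  then have "nat_times (p ^ degree B) \<mu> < \<mu>"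
    using \<open>\<mu> < 0\<close> assms(1) by (intro nat_times_lt_self) auto
  ultimately show False
    using left comm by auto
qed

lemma commuting_in_val_ideal_poly_eq_0:
  assumes "p \<ge> 2" and B: "in_val_ring_poly v B" "degree B \<ge> 1" "v (lead_coeff B) = 0"
    and comm: "tmult p h B = tmult p B h" and h: "in_val_ideal_poly v h"
  shows "h = 0"
proof (rule ccontr)
  assume "h \<noteq> 0"
  then obtain J where J: "is_last_min_coeff v h J"
    using is_last_min_coeff_exists by blast
  define \<mu> where "\<mu> = v (coeff h J)"
  have "0 < \<mu>"
    using J h unfolding is_last_min_coeff_def in_val_ideal_poly_def val_ideal_iff \<mu>_def by blast
  define n where "n = J + degree B"
  have "lead_coeff B \<noteq> 0"
    using B(2) by auto
  then have right: "coeff (tmult p h B) n \<noteq> 0" "v (coeff (tmult p h B) n) = \<mu>"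
    using v_coeff_tmult_right_lead[of p B h J] assms(1) B J by (auto simp: n_def \<mu>_def)
  have "J < n"
    using B(2) by (simp add: n_def)
  then have "coeff h n = 0 \<or> \<mu> < v (coeff h n)"
    using J by (auto simp: is_last_min_coeff_def \<mu>_def)
  then have "coeff B 0 * coeff h n = 0 \<or> \<mu> < v (coeff B 0 * coeff h n)"
    using v_mult_val_ring_ge[of "coeff h n" "coeff B 0"] in_val_ring_poly_coeff[OF B(1)]
    by (cases "coeff B 0 = 0 \<or> coeff h n = 0") (auto simp: mult.commute intro: less_le_trans)
  moreover have "coeff (tmult p B h) n - coeff B 0 * coeff h n = 0 \<or>
      \<mu> < v (coeff (tmult p B h) n - coeff B 0 * coeff h n)"
  proof -
    have "coeff (tmult p B h) n - coeff B 0 * coeff h n = 0 \<or>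
        \<mu> + \<mu> \<le> v (coeff (tmult p B h) n - coeff B 0 * coeff h n)"
      using \<open>0 < \<mu>\<close> J by (intro v_coeff_tmult_tail_ge[OF assms(1) B(1)]) (auto simp: is_last_min_coeff_def \<mu>_def)
    moreover have "\<mu> < \<mu> + \<mu>"
      using \<open>0 < \<mu>\<close> by simp
    ultimately show ?thesis
      using less_le_trans by blast
  qed
  ultimately have "coeff (tmult p B h) n = 0 \<or> \<mu> < v (coeff (tmult p B h) n)"
    using v_add_gt by fastforce
  then show False
    using right comm by auto
qed

lemma v_coeff_twisted_commutator_ge:
  assumes "p \<ge> 2" and B: "in_val_ring_poly v B" "B \<noteq> 0" "v (lead_coeff B) = 0"
    and "0 \<le> \<mu>" and r_ge: "\<And>k. coeff r k \<noteq> 0 \<Longrightarrow> \<mu> \<le> v (coeff r k)" and "degree r < degree B"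
    and rel: "tmult p B r = tmult p s B" and "coeff s k \<noteq> 0"
  shows "\<mu> + \<mu> \<le> v (coeff s k)"
proof -
  have "s \<noteq> 0"
    using assms(9) by auto
  then obtain K where K: "is_last_min_coeff v s K"
    using is_last_min_coeff_exists by blast
  define n where "n = K + degree B"
  have "coeff (tmult p s B) n \<noteq> 0 \<and> v (coeff (tmult p s B) n) = v (coeff s K)"
    unfolding n_def using assms(1) B K by (intro v_coeff_tmult_right_lead) auto
  moreover have "coeff r n = 0"
    using assms(7) by (intro coeff_eq_0) (simp add: n_def)
  moreover have "coeff (tmult p B r) n - coeff B 0 * coeff r n = 0 \<or>
      \<mu> + \<mu> \<le> v (coeff (tmult p B r) n - coeff B 0 * coeff r n)"
    using v_coeff_tmult_tail_ge[OF assms(1) B(1) assms(5) r_ge] by blast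
  ultimately have "\<mu> + \<mu> \<le> v (coeff s K)"
    using rel by auto
  then show ?thesis
    using K assms(9) by (force simp: is_last_min_coeff_def)
qed

text \<open>Compared at a minimal coefficient of \<open>r\<close>, the term \<open>B\<^sub>0 r\<^sub>J\<close> of \<open>B r\<close> has valuation \<open>\<mu>\<close>,
  whereas all coefficients of \<open>s B\<close> have valuation at least \<open>2\<mu>\<close>.\<close>

lemma remainder_eq_0_if_twisted_commutator:
  assumes "p \<ge> 2" and B: "in_val_ring_poly v B" "B \<noteq> 0" "v (lead_coeff B) = 0"
    and B0: "coeff B 0 \<noteq> 0" "v (coeff B 0) = 0"
    and r: "in_val_ideal_poly v r" "r = 0 \<or> degree r < degree B"
    and rel: "tmult p B r = tmult p s B"
  shows "r = 0"
proof (rule ccontr)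
  assume "r \<noteq> 0"
  then obtain J where J: "is_last_min_coeff v r J"
    using is_last_min_coeff_exists by blast
  define \<mu> where "\<mu> = v (coeff r J)"
  have "0 < \<mu>"
    using J r(1) unfolding is_last_min_coeff_def in_val_ideal_poly_def val_ideal_iff \<mu>_def by blast
  have r_ge: "\<And>k. coeff r k \<noteq> 0 \<Longrightarrow> \<mu> \<le> v (coeff r k)"
    using J by (simp add: is_last_min_coeff_def \<mu>_def)
  have "coeff (tmult p s B) J = 0 \<or> \<mu> + \<mu> \<le> v (coeff (tmult p s B) J)"
    using assms(1) B(1) v_coeff_twisted_commutator_ge[OF assms(1) B _ r_ge _ rel] \<open>0 < \<mu>\<close> r(2) \<open>r \<noteq> 0\<close>
    by (intro v_coeff_tmult_ge) auto
  moreover have "coeff (tmult p B r) J \<noteq> 0 \<and> v (coeff (tmult p B r) J) = \<mu>"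
  proof -
    have lead: "coeff B 0 * coeff r J \<noteq> 0" "v (coeff B 0 * coeff r J) = \<mu>"
      using B0 J v_mult by (simp_all add: is_last_min_coeff_def \<mu>_def)
    have "\<mu> < \<mu> + \<mu>"
      using \<open>0 < \<mu>\<close> by simp
    moreover have "coeff (tmult p B r) J - coeff B 0 * coeff r J = 0 \<or>
        \<mu> + \<mu> \<le> v (coeff (tmult p B r) J - coeff B 0 * coeff r J)"
      using v_coeff_tmult_tail_ge[OF assms(1) B(1) _ r_ge] \<open>0 < \<mu>\<close> by simp
    ultimately have "coeff (tmult p B r) J - coeff B 0 * coeff r J = 0 \<or>
        \<mu> < v (coeff (tmult p B r) J - coeff B 0 * coeff r J)"
      using less_le_trans by blast
    then show ?thesis
      using v_add_dominant[OF lead(1), of "coeff (tmult p B r) J - coeff B 0 * coeff r J"] lead(2)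
      by simp
  qed
  ultimately show False
    using rel \<open>0 < \<mu>\<close> by auto
qed

lemma commuting_remainder_eq_0:
  assumes "CHAR('l) = p" "prime p"
    and B: "in_val_ring_poly v B" "B \<noteq> 0" "v (lead_coeff B) = 0" "coeff B 0 \<noteq> 0" "v (coeff B 0) = 0"
    and comm: "tmult p g B = tmult p B g" and g: "g = tmult p q B + r"
    and r: "in_val_ideal_poly v r" "r = 0 \<or> degree r < degree B"
  shows "r = 0"
proof -
  have p: "p \<ge> 2" "p > 0"
    using prime_ge_2_nat[OF assms(2)] by auto
  have "tmult p B g = tmult p (tmult p B q) B + tmult p B r"
    unfolding g tmult_add_right[OF assms(1,2)] tmult_assoc[OF assms(1,2)] ..
  moreover have "tmult p g B = tmult p (tmult p q B) B + tmult p r B"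
    unfolding g tmult_add_left[OF p(2)] ..
  ultimately have "tmult p B r = tmult p (tmult p q B - tmult p B q + r) B"
    using comm by (simp add: tmult_add_left[OF p(2)] tmult_diff_left[OF p(2)] algebra_simps)
  then show ?thesis
    using remainder_eq_0_if_twisted_commutator[OF p(1) B r] by blast
qed

lemma tmult_division_step:
  assumes "p > 0" and B: "in_val_ring_poly v B" "lead_coeff B \<noteq> 0" "v (lead_coeff B) = 0"
    and g: "in_val_ring_poly v g" "g \<noteq> 0" "degree B \<le> degree g"
  obtains q where "in_val_ring_poly v q" "g - tmult p q B = 0 \<or> degree (g - tmult p q B) < degree g"
proof -
  define m where "m = degree g - degree B"
  define c where "c = lead_coeff g * inverse (lead_coeff B ^ p ^ m)"
  have unit: "lead_coeff B ^ p ^ m \<noteq> 0" "v (inverse (lead_coeff B ^ p ^ m)) = 0"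
    using B by (simp_all add: v_inverse v_power)
  then have "inverse (lead_coeff B ^ p ^ m) \<in> val_ring v"
    by (simp add: val_ring_iff)
  then have "c \<in> val_ring v"
    unfolding c_def using g(1) by (intro val_ring_mult in_val_ring_poly_coeff)
  then have q: "in_val_ring_poly v (monom c m)"
    by (rule in_val_ring_poly_monom)
  have "c \<noteq> 0"
    using g(2) unit(1) by (simp add: c_def)
  then have "coeff (tmult p (monom c m) B) (degree g) = lead_coeff g"
    "degree (tmult p (monom c m) B) \<le> degree g"
    using coeff_tmult_degree_sum[OF assms(1), of "monom c m" B] g(3) unit(1)
    by (simp_all add: degree_monom_eq m_def c_def)
  then have "coeff (g - tmult p (monom c m) B) (degree g) = 0"
    "degree (g - tmult p (monom c m) B) \<le> degree g"
    by (simp_all add: degree_diff_le)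
  then have "g - tmult p (monom c m) B = 0 \<or> degree (g - tmult p (monom c m) B) < degree g"
    by (metis le_neq_implies_less leading_coeff_0_iff)
  with q show ?thesis
    by (rule that)
qed

lemma tmult_division:
  assumes "p > 0" and B: "in_val_ring_poly v B" "lead_coeff B \<noteq> 0" "v (lead_coeff B) = 0"
    and "in_val_ring_poly v g"
  shows "\<exists>q r. in_val_ring_poly v q \<and> in_val_ring_poly v r \<and> g = tmult p q B + r \<and>
    (r = 0 \<or> degree r < degree B)"
  using assms(5)
proof (induction "degree g" arbitrary: g rule: less_induct)
  case less
  show ?case
  proof (cases "g = 0 \<or> degree g < degree B")
    case True
    then show ?thesis
      using less.prems assms(1) by (intro exI[of _ 0] exI[of _ g]) auto
  next
    case False
    then have "g \<noteq> 0" "degree B \<le> degree g"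
      by auto
    then obtain q0 where q0: "in_val_ring_poly v q0"
      "g - tmult p q0 B = 0 \<or> degree (g - tmult p q0 B) < degree g"
      by (rule tmult_division_step[OF assms(1) B less.prems])
    have rest: "in_val_ring_poly v (g - tmult p q0 B)"
      using less.prems q0(1) assms(1) B(1) by (intro in_val_ring_poly_diff in_val_ring_poly_tmult)
    obtain q r where qr: "in_val_ring_poly v q" "in_val_ring_poly v r"
      "g - tmult p q0 B = tmult p q B + r" "r = 0 \<or> degree r < degree B"
      using q0(2)
    proof
      assume "g - tmult p q0 B = 0"
      then show ?thesis
        using that[of 0 0] assms(1) by simp
    qed (use less.hyps rest in blast)
    then have "g = tmult p (q0 + q) B + r"
      by (simp add: tmult_add_left[OF assms(1)] algebra_simps)
    then show ?thesis
      using in_val_ring_poly_add[OF q0(1) qr(1)] qr(2,4) by blast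
  qed
qed

end

section \<open>Reduction modulo the maximal ideal\<close>

locale residue_field = valued_field v for v :: "'l::field \<Rightarrow> 'g::linordered_ab_group_add" +
  fixes red :: "'l \<Rightarrow> 'k::field"
  assumes residue_map: "residue_map v red"
begin

lemma red_1 [simp]: "red 1 = 1"
  using residue_map by (simp add: residue_map_def)

lemma red_add: "x \<in> val_ring v \<Longrightarrow> y \<in> val_ring v \<Longrightarrow> red (x + y) = red x + red y"
  using residue_map by (simp add: residue_map_def)

lemma red_mult: "x \<in> val_ring v \<Longrightarrow> y \<in> val_ring v \<Longrightarrow> red (x * y) = red x * red y"
  using residue_map by (simp add: residue_map_def)

lemma red_eq_0_iff: "x \<in> val_ring v \<Longrightarrow> red x = 0 \<longleftrightarrow> x \<in> val_ideal v"
  using residue_map by (simp add: residue_map_def)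

lemma red_0 [simp]: "red 0 = 0"
  using red_eq_0_iff[of 0] by simp

lemma red_diff: "x \<in> val_ring v \<Longrightarrow> y \<in> val_ring v \<Longrightarrow> red (x - y) = red x - red y"
  using red_add[of "x - y" y] by (simp add: val_ring_diff)

lemma red_sum: "(\<And>i. i \<in> I \<Longrightarrow> t i \<in> val_ring v) \<Longrightarrow> red (sum t I) = (\<Sum>i\<in>I. red (t i))"
  by (induct I rule: infinite_finite_induct) (auto simp: red_add val_ring_sum)

lemma red_power: "x \<in> val_ring v \<Longrightarrow> red (x ^ n) = red x ^ n"
  by (induct n) (auto simp: red_mult val_ring_power)

lemma red_of_nat: "red (of_nat n) = of_nat n"
proof (induct n)
  case (Suc n)
  have "of_nat n \<in> val_ring v"
    by (induct n) (auto intro: val_ring_add)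
  then show ?case
    using Suc red_add[of 1 "of_nat n"] by (simp add: add.commute)
qed simp

lemma CHAR_residue_field:
  assumes "CHAR('l) = p" and "prime p"
  shows "CHAR('k) = p"
proof -
  have "of_nat p = (0::'k)"
    using red_of_nat[of p] of_nat_CHAR[where 'a = 'l] assms(1) by simp
  then have "CHAR('k) dvd p"
    by (simp add: of_nat_eq_0_iff_char_dvd)
  moreover have "CHAR('k) \<noteq> Suc 0"
    by simp
  ultimately show ?thesis
    using assms(2) by (auto simp: prime_nat_iff)
qed

lemma map_poly_red_add:
  "in_val_ring_poly v f \<Longrightarrow> in_val_ring_poly v g \<Longrightarrow> map_poly red (f + g) = map_poly red f + map_poly red g"
  by (rule poly_eqI) (simp add: coeff_map_poly red_add in_val_ring_poly_coeff)

lemma map_poly_red_diff: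
  "in_val_ring_poly v f \<Longrightarrow> in_val_ring_poly v g \<Longrightarrow> map_poly red (f - g) = map_poly red f - map_poly red g"
  by (rule poly_eqI) (simp add: coeff_map_poly red_diff in_val_ring_poly_coeff)

lemma map_poly_red_tmult:
  assumes "p > 0" and "in_val_ring_poly v f" "in_val_ring_poly v g"
  shows "map_poly red (tmult p f g) = tmult p (map_poly red f) (map_poly red g)"
  using assms
  by (intro poly_eqI) (simp add: coeff_map_poly coeff_tmult red_sum red_mult red_power
      val_ring_mult val_ring_power in_val_ring_poly_coeff)

lemma in_val_ideal_poly_iff:
  "in_val_ring_poly v f \<Longrightarrow> in_val_ideal_poly v f \<longleftrightarrow> map_poly red f = 0"
  by (auto simp: in_val_ideal_poly_def red_eq_0_iff in_val_ring_poly_coeff poly_eq_iff coeff_map_poly)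

lemma degree_map_poly_red:
  "lead_coeff f \<noteq> 0 \<Longrightarrow> v (lead_coeff f) = 0 \<Longrightarrow> degree (map_poly red f) = degree f"
  using val_unit_iff[of "lead_coeff f"] red_eq_0_iff[of "lead_coeff f"] by (intro map_poly_degree_eq) auto

end

section \<open>Finiteness of the residue rings of \<open>A\<close>\<close>

definition prime_field :: "'a::ring_1 set" where
  "prime_field = range of_int"

lemma prime_field_of_int [simp]: "of_int c \<in> prime_field"
  by (simp add: prime_field_def)

lemma prime_field_0 [simp]: "0 \<in> prime_field"
  and prime_field_1 [simp]: "1 \<in> prime_field"
  using prime_field_of_int[of 0] prime_field_of_int[of 1] by simp_all

lemma prime_field_closed:
  assumes "x \<in> prime_field" "y \<in> prime_field"
  shows "x + y \<in> prime_field" "x * y \<in> prime_field" "- x \<in> prime_field"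
proof -
  obtain a b where "x = of_int a" "y = of_int b"
    using assms by (auto simp: prime_field_def)
  then show "x + y \<in> prime_field" "x * y \<in> prime_field" "- x \<in> prime_field"
    using prime_field_of_int[of "a + b"] prime_field_of_int[of "a * b"] prime_field_of_int[of "- a"]
    by simp_all
qed

lemma finite_prime_field:
  assumes "CHAR('a::ring_1) > 0"
  shows "finite (prime_field :: 'a set)"
proof -
  have mod: "(of_int c :: 'a) = of_int (c mod int CHAR('a))" for c
  proof -
    have "int CHAR('a) dvd c - c mod int CHAR('a)"
      by (simp add: minus_mod_eq_mult_div)
    then have "(of_int (c - c mod int CHAR('a)) :: 'a) = 0"
      by (simp only: of_int_eq_0_iff_char_dvd)
    then show ?thesis
      by simp
  qed
  have "(prime_field :: 'a set) \<subseteq> of_int ` {0..<int CHAR('a)}"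
  proof
    fix x :: 'a assume "x \<in> prime_field"
    then obtain c where "x = of_int c"
      by (auto simp: prime_field_def)
    moreover have "c mod int CHAR('a) \<in> {0..<int CHAR('a)}"
      using assms by simp
    ultimately show "x \<in> of_int ` {0..<int CHAR('a)}"
      using mod by blast
  qed
  then show ?thesis
    using finite_subset by blast
qed

lemma prime_field_inverse:
  assumes "prime CHAR('a::ring_1)" and "(x::'a) \<in> prime_field" "x \<noteq> 0"
  shows "\<exists>u\<in>prime_field. u * x = 1"
proof -
  obtain c where c: "x = of_int c"
    using assms(2) by (auto simp: prime_field_def)
  have "\<not> int CHAR('a) dvd c"
    using assms(3) c by (simp only: of_int_eq_0_iff_char_dvd[symmetric]) simp
  then have "coprime (int CHAR('a)) c"
    using assms(1) by (simp add: prime_imp_coprime)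
  then obtain u w where uw: "u * int CHAR('a) + w * c = 1"
    using bezout_int[of "int CHAR('a)" c] by auto
  have "(of_int (u * int CHAR('a)) :: 'a) = 0"
    by (simp only: of_int_eq_0_iff_char_dvd) simp
  moreover have "(of_int (u * int CHAR('a) + w * c) :: 'a) = 1"
    using uw by simp
  ultimately have "of_int w * x = (1::'a)"
    unfolding c of_int_add of_int_mult[of w] by simp
  then show ?thesis
    using prime_field_of_int by blast
qed

text \<open>\<open>Fp_adjoin t\<close> is the subring \<open>\<bbbF>\<^sub>p[t]\<close> again (cf. \<open>prime_poly_subring\<close>), now with coefficients
  taken from the prime field, where they can be inverted.\<close>

definition Fp_span :: "'a::ring_1 \<Rightarrow> nat \<Rightarrow> 'a set" where
  "Fp_span t D = {\<Sum>i<D. e i * t ^ i | e. \<forall>i. e i \<in> prime_field}"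

definition Fp_adjoin :: "'a::ring_1 \<Rightarrow> 'a set" where
  "Fp_adjoin t = (\<Union>D. Fp_span t D)"

lemma Fp_spanI: "(\<And>i. e i \<in> prime_field) \<Longrightarrow> x = (\<Sum>i<D. e i * t ^ i) \<Longrightarrow> x \<in> Fp_span t D"
  unfolding Fp_span_def by blast

lemma finite_Fp_span:
  assumes "CHAR('a::ring_1) > 0"
  shows "finite (Fp_span (t::'a) D)"
proof -
  have "Fp_span t D \<subseteq> (\<lambda>e. \<Sum>i<D. e i * t ^ i) ` (PiE {..<D} (\<lambda>_. prime_field))"
  proof
    fix x assume "x \<in> Fp_span t D"
    then obtain e where e: "\<forall>i. e i \<in> prime_field" "x = (\<Sum>i<D. e i * t ^ i)"
      by (auto simp: Fp_span_def)
    then have "restrict e {..<D} \<in> PiE {..<D} (\<lambda>_. prime_field)" "x = (\<Sum>i<D. restrict e {..<D} i * t ^ i)"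
      by (simp_all add: restrict_PiE_iff)
    then show "x \<in> (\<lambda>e. \<Sum>i<D. e i * t ^ i) ` (PiE {..<D} (\<lambda>_. prime_field))"
      by blast
  qed
  moreover have "finite (PiE {..<D} (\<lambda>_. (prime_field :: 'a set)))"
    using finite_prime_field[OF assms] by (intro finite_PiE) auto
  ultimately show ?thesis
    using finite_subset by blast
qed

lemma Fp_span_0: "0 \<in> Fp_span t D"
  by (rule Fp_spanI[of "\<lambda>_. 0"]) simp_all

lemma Fp_span_add:
  assumes "x \<in> Fp_span t D" "y \<in> Fp_span t D"
  shows "x + y \<in> Fp_span t D"
proof -
  obtain e e' where "\<forall>i. e i \<in> prime_field" "\<forall>i. e' i \<in> prime_field"
    "x = (\<Sum>i<D. e i * t ^ i)" "y = (\<Sum>i<D. e' i * t ^ i)"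
    using assms by (auto simp: Fp_span_def)
  then show ?thesis
    by (intro Fp_spanI[of "\<lambda>i. e i + e' i"]) (simp_all add: prime_field_closed sum.distrib distrib_right)
qed

lemma Fp_span_smult:
  assumes "c \<in> prime_field" "x \<in> Fp_span t D"
  shows "c * x \<in> Fp_span t D"
proof -
  obtain e where "\<forall>i. e i \<in> prime_field" "x = (\<Sum>i<D. e i * t ^ i)"
    using assms(2) by (auto simp: Fp_span_def)
  then show ?thesis
    using assms(1)
    by (intro Fp_spanI[of "\<lambda>i. c * e i"]) (simp_all add: prime_field_closed sum_distrib_left mult.assoc)
qed

lemma Fp_span_power:
  assumes "i < D"
  shows "t ^ i \<in> Fp_span t D"
proof -
  have "(\<Sum>j<D. (if j = i then 1 else 0) * t ^ j) = (\<Sum>j<D. if j = i then t ^ j else 0)"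
    by (rule sum.cong) simp_all
  then have "t ^ i = (\<Sum>j<D. (if j = i then 1 else 0) * t ^ j)"
    using assms by (simp add: sum.delta)
  then show ?thesis
    by (rule Fp_spanI[rotated]) simp
qed

definition Fp_span_mod :: "'a::comm_ring_1 \<Rightarrow> 'a \<Rightarrow> nat \<Rightarrow> 'a set" where
  "Fp_span_mod N t D = {x. \<exists>w\<in>Fp_span t D. N dvd x - w}"

lemma Fp_span_subset_Fp_span_mod: "x \<in> Fp_span t D \<Longrightarrow> x \<in> Fp_span_mod N t D"
  unfolding Fp_span_mod_def by (rule CollectI, rule bexI[of _ x]) simp_all

lemma Fp_span_mod_add:
  assumes "x \<in> Fp_span_mod N t D" "y \<in> Fp_span_mod N t D"
  shows "x + y \<in> Fp_span_mod N t D"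
proof -
  obtain w w' where w: "w \<in> Fp_span t D" "N dvd x - w" "w' \<in> Fp_span t D" "N dvd y - w'"
    using assms by (auto simp: Fp_span_mod_def)
  then have "N dvd (x + y) - (w + w')"
    using dvd_add[OF w(2,4)] by (simp add: algebra_simps)
  then show ?thesis
    using Fp_span_add[OF w(1,3)] by (auto simp: Fp_span_mod_def)
qed

lemma Fp_span_mod_smult:
  assumes "c \<in> prime_field" "x \<in> Fp_span_mod N t D"
  shows "c * x \<in> Fp_span_mod N t D"
proof -
  obtain w where w: "w \<in> Fp_span t D" "N dvd x - w"
    using assms(2) by (auto simp: Fp_span_mod_def)
  then have "N dvd c * x - c * w"
    using dvd_mult[OF w(2), of c] by (simp add: algebra_simps)
  then show ?thesis
    using Fp_span_smult[OF assms(1) w(1)] by (auto simp: Fp_span_mod_def)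
qed

lemma Fp_span_mod_sum:
  "(\<And>i. i \<in> I \<Longrightarrow> f i \<in> Fp_span_mod N t D) \<Longrightarrow> sum f I \<in> Fp_span_mod N t D"
  by (induct I rule: infinite_finite_induct)
    (auto intro: Fp_span_mod_add Fp_span_subset_Fp_span_mod Fp_span_0)

lemma Fp_span_mod_times:
  assumes "t ^ D \<in> Fp_span_mod N t D" and "x \<in> Fp_span_mod N t D"
  shows "t * x \<in> Fp_span_mod N t D"
proof -
  obtain w where w: "w \<in> Fp_span t D" "N dvd x - w"
    using assms(2) by (auto simp: Fp_span_mod_def)
  obtain e where e: "\<forall>i. e i \<in> prime_field" "w = (\<Sum>i<D. e i * t ^ i)"
    using w(1) by (auto simp: Fp_span_def)
  have "t ^ Suc i \<in> Fp_span_mod N t D" if "i < D" for i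
  proof (cases "Suc i < D")
    case True
    then show ?thesis
      by (intro Fp_span_subset_Fp_span_mod Fp_span_power)
  next
    case False
    then have "Suc i = D"
      using that by simp
    then show ?thesis
      using assms(1) by simp
  qed
  then have "(\<Sum>i<D. e i * t ^ Suc i) \<in> Fp_span_mod N t D"
    using e(1) by (intro Fp_span_mod_sum Fp_span_mod_smult) auto
  moreover have "t * w = (\<Sum>i<D. e i * t ^ Suc i)"
    unfolding e(2) sum_distrib_left by (simp add: mult.left_commute)
  ultimately obtain w' where w': "w' \<in> Fp_span t D" "N dvd t * w - w'"
    by (auto simp: Fp_span_mod_def)
  have "N dvd t * (x - w) + (t * w - w')"
    using w(2) w'(2) by simp
  then show ?thesis
    using w'(1) by (auto simp: Fp_span_mod_def algebra_simps)
qed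

lemma Fp_span_mod_generators:
  assumes "prime CHAR('a::comm_ring_1)" and "\<forall>i. e i \<in> prime_field"
  shows "(N::'a) = (\<Sum>i<n. e i * t ^ i) \<Longrightarrow> N \<noteq> 0 \<Longrightarrow>
    \<exists>D. t ^ D \<in> Fp_span_mod N t D \<and> 1 \<in> Fp_span_mod N t D"
proof (induct n)
  case (Suc n)
  show ?case
  proof (cases "e n = 0")
    case True
    then show ?thesis
      using Suc by simp
  next
    case False
    then obtain u where u: "u \<in> prime_field" "u * e n = 1"
      using prime_field_inverse[OF assms(1)] assms(2) by blast
    define w where "w = (\<Sum>i<n. (- u * e i) * t ^ i)"
    have "w \<in> Fp_span t n"
      unfolding w_def using u(1) assms(2) by (intro Fp_spanI[of "\<lambda>i. - u * e i"]) (simp_all add: prime_field_closed)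
    moreover have "t ^ n - w = u * N"
    proof -
      have "u * (e n * t ^ n) = t ^ n"
        using u(2) by (simp flip: mult.assoc)
      then have "u * N = (\<Sum>i<n. u * e i * t ^ i) + t ^ n"
        using Suc.prems(1) by (simp add: sum_distrib_left distrib_left mult.assoc)
      moreover have "w = - (\<Sum>i<n. u * e i * t ^ i)"
        by (simp add: w_def sum_negf)
      ultimately show ?thesis
        by simp
    qed
    ultimately have tn: "t ^ n \<in> Fp_span_mod N t n"
      unfolding Fp_span_mod_def by (metis dvd_triv_right mem_Collect_eq)
    moreover have "1 \<in> Fp_span_mod N t n"
      using tn Fp_span_subset_Fp_span_mod[OF Fp_span_power, of 0 n t N] by (cases n) simp_all
    ultimately show ?thesis
      by blast
  qed
qed simp


lemma Fp_adjoin_subset_Fp_span_mod: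
  assumes "prime CHAR('a::comm_ring_1)" and "(N::'a) \<in> Fp_adjoin t" "N \<noteq> 0"
  obtains D where "Fp_adjoin t \<subseteq> Fp_span_mod N t D"
proof -
  obtain n e where "\<forall>i. e i \<in> prime_field" "N = (\<Sum>i<n. e i * t ^ i)"
    using assms(2) by (auto simp: Fp_adjoin_def Fp_span_def)
  then obtain D where D: "t ^ D \<in> Fp_span_mod N t D" "1 \<in> Fp_span_mod N t D"
    using Fp_span_mod_generators[OF assms(1)] assms(3) by blast
  have powers: "t ^ m \<in> Fp_span_mod N t D" for m
    by (induct m) (simp_all add: D Fp_span_mod_times)
  have "Fp_adjoin t \<subseteq> Fp_span_mod N t D"
  proof
    fix x assume "x \<in> Fp_adjoin t"
    then obtain n e where "\<forall>i. e i \<in> prime_field" "x = (\<Sum>i<n. e i * t ^ i)"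
      by (auto simp: Fp_adjoin_def Fp_span_def)
    then show "x \<in> Fp_span_mod N t D"
      using powers by (auto intro!: Fp_span_mod_sum Fp_span_mod_smult)
  qed
  then show ?thesis
    by (rule that)
qed

definition eval_int_poly :: "'a::comm_ring_1 \<Rightarrow> int poly \<Rightarrow> 'a" where
  "eval_int_poly t q = poly (map_poly of_int q) t"

lemma comm_ring_hom_eval_int_poly: "comm_ring_hom (eval_int_poly t)"
  by unfold_locales (simp_all add: eval_int_poly_def of_int_poly_hom.hom_add of_int_poly_hom.hom_mult)

lemma eval_int_poly_in_Fp_adjoin: "eval_int_poly t q \<in> Fp_adjoin t"
proof -
  define n where "n = Suc (degree (map_poly of_int q :: 'a poly))"
  have "eval_int_poly t q = (\<Sum>i<n. of_int (coeff q i) * t ^ i)"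
    unfolding eval_int_poly_def poly_altdef n_def by (simp add: lessThan_Suc_atMost coeff_map_poly)
  then have "eval_int_poly t q \<in> Fp_span t n"
    by (rule Fp_spanI[rotated]) simp
  then show ?thesis
    by (auto simp: Fp_adjoin_def)
qed

lemma prime_poly_subring_eval_int_poly: "x \<in> prime_poly_subring t \<Longrightarrow> \<exists>q. eval_int_poly t q = x"
proof -
  interpret h: comm_ring_hom "eval_int_poly t"
    by (rule comm_ring_hom_eval_int_poly)
  assume "x \<in> prime_poly_subring t"
  then obtain n c where x: "x = (\<Sum>i<n. of_nat (c i) * t ^ i)"
    unfolding prime_poly_subring_def by auto
  have "eval_int_poly t (\<Sum>i<n. monom (int (c i)) i) = x"
    unfolding h.hom_sum x by (simp add: eval_int_poly_def map_poly_monom poly_monom)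
  then show ?thesis
    by blast
qed

lemma det_mult_eq_0_if_mult_vec_eq_0:
  fixes M :: "'a::comm_ring_1 mat"
  assumes M: "M \<in> carrier_mat L L" and kernel: "\<And>j. j < L \<Longrightarrow> (\<Sum>k<L. M $$ (j, k) * b k) = 0"
    and "k < L"
  shows "det M * b k = 0"
proof -
  have adj: "adj_mat M \<in> carrier_mat L L" "adj_mat M * M = det M \<cdot>\<^sub>m 1\<^sub>m L"
    using adj_mat[OF M] by auto
  have "(\<Sum>j<L. (adj_mat M * M) $$ (k, j) * b j) = (\<Sum>j<L. if j = k then det M * b j else 0)"
    unfolding adj(2) by (rule sum.cong) (use assms(3) in auto)
  then have "det M * b k = (\<Sum>j<L. (adj_mat M * M) $$ (k, j) * b j)"
    using assms(3) by (simp add: sum.delta)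
  also have "\<dots> = (\<Sum>j<L. (\<Sum>i<L. adj_mat M $$ (k, i) * M $$ (i, j)) * b j)"
    using assms(3) adj(1) M by (intro sum.cong refl) (auto simp: scalar_prod_def atLeast0LessThan)
  also have "\<dots> = (\<Sum>i<L. adj_mat M $$ (k, i) * (\<Sum>j<L. M $$ (i, j) * b j))"
    by (simp add: sum_distrib_left sum_distrib_right mult.assoc) (rule sum.swap)
  also have "\<dots> = 0"
    using kernel by simp
  finally show ?thesis .
qed

text \<open>The determinant trick: if multiplication by \<open>a\<close> maps generators \<open>b\<^sub>j\<close> (spanning \<open>1\<close>) by
  a matrix \<open>Q\<close>, then \<open>a\<close> is a root of the characteristic polynomial of \<open>Q\<close>.\<close>

lemma poly_char_poly_eq_0_if_mult_matrix:
  fixes a :: "'a::comm_ring_1" and b :: "nat \<Rightarrow> 'a"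
  assumes mult: "\<And>j. j < L \<Longrightarrow> a * b j = (\<Sum>k<L. Q j k * b k)" and one: "1 = (\<Sum>j<L. c j * b j)"
  shows "poly (char_poly (mat L L (\<lambda>(j, k). Q j k))) a = 0"
proof -
  define M where "M = mat L L (\<lambda>(j, k). (if j = k then a else 0) - Q j k)"
  have M: "M \<in> carrier_mat L L"
    by (simp add: M_def)
  have "(\<Sum>k<L. M $$ (j, k) * b k) = 0" if "j < L" for j
  proof -
    have "(\<Sum>k<L. M $$ (j, k) * b k) = (\<Sum>k<L. if j = k then a * b k else 0) - (\<Sum>k<L. Q j k * b k)"
      unfolding sum_subtractf[symmetric] by (rule sum.cong) (use that in \<open>auto simp: M_def left_diff_distrib\<close>)
    then show ?thesis
      using that mult[of j] by (simp add: sum.delta)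
  qed
  then have det: "det M * b k = 0" if "k < L" for k
    using det_mult_eq_0_if_mult_vec_eq_0[OF M _ that] by blast
  have "det M = det M * (\<Sum>j<L. c j * b j)"
    using one by simp
  also have "\<dots> = (\<Sum>j<L. c j * (det M * b j))"
    by (simp add: sum_distrib_left mult.left_commute)
  also have "\<dots> = 0"
    using det by simp
  finally have "det M = 0" .
  moreover have "poly (char_poly (mat L L (\<lambda>(j, k). Q j k))) a = det M"
    unfolding char_poly_def by (rule poly_det_cong[OF M]) (auto simp: char_poly_matrix_def M_def)
  ultimately show ?thesis
    by simp
qed

lemma integral_over_Fp_adjoin:
  fixes a :: "'a::comm_ring_1" and bs :: "'a list"
  assumes gen: "\<forall>x::'a. \<exists>q::nat \<Rightarrow> 'a. (\<forall>j<length bs. q j \<in> prime_poly_subring t) \<and>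
      x = (\<Sum>j<length bs. q j * bs ! j)"
  shows "\<exists>P::'a poly. lead_coeff P = 1 \<and> (\<forall>i. coeff P i \<in> Fp_adjoin t) \<and> poly P a = 0"
proof -
  interpret h: comm_ring_hom "eval_int_poly t"
    by (rule comm_ring_hom_eval_int_poly)
  define L where "L = length bs"
  have "\<forall>j. \<exists>q::nat \<Rightarrow> 'a. (\<forall>k<L. q k \<in> prime_poly_subring t) \<and> a * bs ! j = (\<Sum>k<L. q k * bs ! k)"
    using gen L_def by blast
  then obtain Q where Q: "\<And>j k. k < L \<Longrightarrow> Q j k \<in> prime_poly_subring t"
    "\<And>j. a * bs ! j = (\<Sum>k<L. Q j k * bs ! k)"
    by metis
  have "\<forall>j k. \<exists>q. k < L \<longrightarrow> eval_int_poly t q = Q j k"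
    using Q(1) prime_poly_subring_eval_int_poly by blast
  then obtain qi where qi: "\<And>j k. k < L \<Longrightarrow> eval_int_poly t (qi j k) = Q j k"
    by metis
  define QA where "QA = mat L L (\<lambda>(j, k). Q j k)"
  have QA: "QA \<in> carrier_mat L L" "QA = map_mat (eval_int_poly t) (mat L L (\<lambda>(j, k). qi j k))"
    unfolding QA_def by (auto intro!: eq_matI simp: qi)
  obtain c where "(1::'a) = (\<Sum>j<L. c j * bs ! j)"
    using gen L_def by blast
  then have "poly (char_poly QA) a = 0"
    unfolding QA_def using Q(2) by (intro poly_char_poly_eq_0_if_mult_matrix)
  moreover have "lead_coeff (char_poly QA) = 1"
    using degree_monic_char_poly[OF QA(1)] by simp
  moreover have "\<forall>i. coeff (char_poly QA) i \<in> Fp_adjoin t"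
    unfolding QA(2) h.char_poly_hom[OF mat_carrier]
    by (simp add: coeff_map_poly eval_int_poly_in_Fp_adjoin)
  ultimately show ?thesis
    by blast
qed

lemma nonzero_root_dvd_nonzero_coeff:
  fixes a :: "'a::idom"
  assumes "a \<noteq> 0"
  shows "lead_coeff P = 1 \<Longrightarrow> (\<forall>i. coeff P i \<in> S) \<Longrightarrow> poly P a = 0 \<Longrightarrow> \<exists>N\<in>S. N \<noteq> 0 \<and> a dvd N"
proof (induction "degree P" arbitrary: P rule: less_induct)
  case less
  obtain c P' where P: "P = pCons c P'"
    by (cases P) auto
  show ?case
  proof (cases "P' = 0")
    case True
    then show ?thesis
      using less.prems P by simp
  next
    case False
    have P': "degree P' < degree P" "lead_coeff P' = 1" "\<forall>i. coeff P' i \<in> S"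
      using less.prems P False by (simp_all, metis coeff_pCons_Suc)
    have "c \<in> S"
      using less.prems P by (metis coeff_pCons_0)
    have "c = a * (- poly P' a)"
      using less.prems P by (simp add: eq_neg_iff_add_eq_0)
    show ?thesis
    proof (cases "c = 0")
      case True
      then show ?thesis
        using less.hyps[OF P'(1) P'(2,3)] \<open>c = a * (- poly P' a)\<close> assms by simp
    next
      case False
      then show ?thesis
        using \<open>c \<in> S\<close> \<open>c = a * (- poly P' a)\<close> by (metis dvd_triv_left)
    qed
  qed
qed

lemma finite_residues:
  fixes a :: "'a::idom"
  assumes "prime CHAR('a)" and "a \<noteq> 0"
    and gen: "\<forall>x::'a. \<exists>q::nat \<Rightarrow> 'a. (\<forall>j<length bs. q j \<in> prime_poly_subring t) \<and>
      x = (\<Sum>j<length bs. q j * bs ! j)"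
  shows "\<exists>F. finite F \<and> (\<forall>x. \<exists>y\<in>F. a dvd x - y)"
proof -
  obtain P where "lead_coeff P = 1" "\<forall>i. coeff P i \<in> Fp_adjoin t" "poly P a = 0"
    using integral_over_Fp_adjoin[OF gen] by blast
  then obtain N where N: "N \<in> Fp_adjoin t" "N \<noteq> 0" "a dvd N"
    using nonzero_root_dvd_nonzero_coeff[OF assms(2)] by blast
  obtain D where D: "Fp_adjoin t \<subseteq> Fp_span_mod N t D"
    using Fp_adjoin_subset_Fp_span_mod[OF assms(1) N(1,2)] .
  have Fp_adjoin: "prime_poly_subring t \<subseteq> Fp_adjoin t"
    using prime_poly_subring_eval_int_poly eval_int_poly_in_Fp_adjoin by blast
  define L where "L = length bs"
  define F where "F = (\<lambda>w. \<Sum>j<L. w j * bs ! j) ` PiE {..<L} (\<lambda>_. Fp_span t D)"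
  have "finite F"
    unfolding F_def using finite_Fp_span[of t D] assms(1) prime_gt_0_nat
    by (intro finite_imageI finite_PiE) auto
  moreover have "\<exists>y\<in>F. a dvd x - y" for x
  proof -
    obtain q where q: "\<forall>j<L. q j \<in> prime_poly_subring t" "x = (\<Sum>j<L. q j * bs ! j)"
      using gen L_def by blast
    then have "\<forall>j. \<exists>w. j < L \<longrightarrow> w \<in> Fp_span t D \<and> N dvd q j - w"
      using D Fp_adjoin unfolding Fp_span_mod_def by blast
    then obtain w where w: "\<And>j. j < L \<Longrightarrow> w j \<in> Fp_span t D \<and> N dvd q j - w j"
      by metis
    have "(\<Sum>j<L. w j * bs ! j) \<in> F"
      unfolding F_def using w by (intro image_eqI[of _ _ "restrict w {..<L}"]) auto
    moreover have "x - (\<Sum>j<L. w j * bs ! j) = (\<Sum>j<L. (q j - w j) * bs ! j)"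
      using q(2) by (simp add: sum_subtractf left_diff_distrib)
    then have "a dvd x - (\<Sum>j<L. w j * bs ! j)"
      using w N(3) by (auto intro!: dvd_sum dvd_trans[OF _ dvd_mult2])
    ultimately show ?thesis
      by blast
  qed
  ultimately show ?thesis
    by blast
qed

section \<open>Powers of a prime ideal modulo \<open>a\<close>\<close>

lemma periodic_powers_mod:
  fixes a c :: "'a::comm_ring_1"
  assumes "finite F" and "\<forall>x. \<exists>y\<in>F. a dvd x - y"
  obtains n T where "T \<ge> 1" "a dvd c ^ n * (1 - c ^ T)"
proof -
  have "\<forall>n. \<exists>y. y \<in> F \<and> a dvd c ^ n - y"
    using assms(2) by blast
  then obtain f where f: "\<And>n. f n \<in> F \<and> a dvd c ^ n - f n"
    by metis
  have "\<not> inj_on f {..card F}"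
  proof
    assume "inj_on f {..card F}"
    then have "card {..card F} \<le> card F"
      using f assms(1) by (intro card_inj_on_le) auto
    then show False
      by simp
  qed
  then obtain m1 m2 where "m1 \<noteq> m2" "f m1 = f m2"
    unfolding inj_on_def by blast
  then obtain n1 n2 where n: "n1 < n2" "f n1 = f n2"
    by (cases "m1 < m2") (auto simp: not_less_iff_gr_or_eq)
  have "c ^ n1 - c ^ n2 = (c ^ n1 - f n1) - (c ^ n2 - f n2)"
    using n(2) by simp
  then have "a dvd c ^ n1 - c ^ n2"
    using f[of n1] f[of n2] by (metis dvd_diff)
  moreover have "c ^ n1 * (1 - c ^ (n2 - n1)) = c ^ n1 - c ^ n2"
    using n(1) by (simp add: right_diff_distrib flip: power_add)
  ultimately show ?thesis
    using n(1) by (intro that[of "n2 - n1" n1]) auto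
qed

lemma dvd_prod_list_diff_power:
  fixes a c :: "'a::comm_ring_1"
  shows "(\<And>x. x \<in> set xs \<Longrightarrow> a dvd x - c) \<Longrightarrow> a dvd prod_list xs - c ^ length xs"
proof (induct xs)
  case (Cons x xs)
  have "x * prod_list xs - c * c ^ length xs = x * (prod_list xs - c ^ length xs) + (x - c) * c ^ length xs"
    by (simp add: algebra_simps)
  then show ?case
    using Cons by (simp add: dvd_add)
qed simp

lemma prod_list_filter_split:
  fixes xs :: "'a::comm_monoid_mult list"
  shows "prod_list xs = prod_list (filter p xs) * prod_list (filter (\<lambda>x. \<not> p x) xs)"
  by (induct xs) (auto simp: mult.assoc mult.left_commute)

lemma sum_length_filter:
  assumes "finite C" and "\<And>x. x \<in> set xs \<Longrightarrow> f x \<in> C"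
  shows "(\<Sum>y\<in>C. length (filter (\<lambda>x. f x = y) xs)) = length xs"
  using assms(2)
proof (induct xs)
  case (Cons x xs)
  have "(\<Sum>y\<in>C. length (filter (\<lambda>z. f z = y) (x # xs)))
      = (\<Sum>y\<in>C. (if f x = y then 1 else 0) + length (filter (\<lambda>z. f z = y) xs))"
    by (rule sum.cong) auto
  then show ?case
    using Cons assms(1) by (simp add: sum.distrib sum.delta)
qed simp

text \<open>The elements of an ideal power \<open>P\<^sup>k\<close> are sums of multiples of products of \<open>k\<close> elements
  of \<open>P\<close>, so a divisibility property of such products passes to \<open>P\<^sup>k\<close>.\<close>

lemma dvd_mult_ideal_pow:
  fixes a \<beta> :: "'a::comm_ring_1"
  assumes prod: "\<And>xs. set xs \<subseteq> P \<Longrightarrow> length xs = k \<Longrightarrow> a dvd \<beta> * prod_list xs"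
    and "w \<in> ideal_pow P k"
  shows "a dvd \<beta> * w"
proof -
  have "\<forall>xs. set xs \<subseteq> P \<longrightarrow> length xs + j = k \<longrightarrow> (\<forall>w\<in>ideal_pow P j. a dvd \<beta> * prod_list xs * w)"
    for j
  proof (induct j)
    case (Suc j)
    show ?case
    proof (intro allI impI ballI)
      fix xs w
      assume xs: "set xs \<subseteq> P" "length xs + Suc j = k" and "w \<in> ideal_pow P (Suc j)"
      then have "\<exists>(m::nat) x z. w = (\<Sum>n<m. x n * z n) \<and> (\<forall>n<m. x n \<in> P \<and> z n \<in> ideal_pow P j)"
        by simp
      then obtain m :: nat and x z where w: "w = (\<Sum>n<m. x n * z n)" "\<forall>n<m. x n \<in> P \<and> z n \<in> ideal_pow P j"
        by blast
      have "a dvd \<beta> * prod_list (x n # xs) * z n" if "n < m" for n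
        using Suc[rule_format, of "x n # xs" "z n"] xs w(2) that by simp
      then have "a dvd (\<Sum>n<m. \<beta> * prod_list xs * (x n * z n))"
        by (intro dvd_sum) (simp add: ac_simps)
      then show "a dvd \<beta> * prod_list xs * w"
        by (simp add: w(1) sum_distrib_left)
    qed
  qed (use prod in auto)
  from this[of k] show ?thesis
    using assms(2) by (auto dest: spec[of _ "[]"])
qed

lemma exists_length_filter_ge:
  assumes "finite C" "C \<noteq> {}" and "\<And>x. x \<in> set xs \<Longrightarrow> f x \<in> C" and "length xs = (\<Sum>y\<in>C. n y)"
  shows "\<exists>y\<in>C. n y \<le> length (filter (\<lambda>x. f x = y) xs)"
proof (rule ccontr)
  assume "\<not> ?thesis"
  then have "(\<Sum>y\<in>C. length (filter (\<lambda>x. f x = y) xs)) < (\<Sum>y\<in>C. n y)"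
    using assms(1,2) by (intro sum_strict_mono) auto
  then show False
    using sum_length_filter[OF assms(1), of xs f] assms(3,4) by simp
qed

lemma prod_notin_prime_ideal:
  assumes "finite C" and "\<And>y. y \<in> C \<Longrightarrow> \<gamma> y \<notin> P" and "1 \<notin> P"
    and "\<And>x y. x * y \<in> P \<Longrightarrow> x \<in> P \<or> y \<in> P"
  shows "(\<Prod>y\<in>C. \<gamma> y) \<notin> P"
  using assms by (induction C rule: finite_induct) auto

text \<open>The elements of \<open>P\<close> congruent to a fixed \<open>c \<in> P\<close> modulo \<open>a\<close>: since the powers of \<open>c\<close>
  are eventually periodic modulo \<open>a\<close>, say \<open>a | c\<^sup>n (1 - c\<^sup>T)\<close>, long enough products of them are
  annihilated modulo \<open>a\<close> by \<open>1 - c\<^sup>T \<notin> P\<close>.\<close>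

lemma congruence_class_annihilator:
  fixes a c :: "'a::comm_ring_1"
  assumes "finite F" "\<forall>x. \<exists>y\<in>F. a dvd x - y"
    and "c \<in> P" and Padd: "\<And>x y. x \<in> P \<Longrightarrow> y \<in> P \<Longrightarrow> x + y \<in> P"
    and Pmult: "\<And>x y. x \<in> P \<Longrightarrow> x * y \<in> P" and "1 \<notin> P"
  shows "\<exists>n \<gamma>. \<gamma> \<notin> P \<and>
    (\<forall>xs. (\<forall>x\<in>set xs. a dvd x - c) \<longrightarrow> n \<le> length xs \<longrightarrow> a dvd \<gamma> * prod_list xs)"
proof -
  obtain n T where T: "T \<ge> 1" "a dvd c ^ n * (1 - c ^ T)"
    using periodic_powers_mod[OF assms(1,2)] .
  have "c ^ T = c * c ^ (T - 1)"
    using T(1) by (simp flip: power_Suc)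
  then have "c ^ T \<in> P"
    using assms(3) Pmult by simp
  then have "1 - c ^ T \<notin> P"
    using Padd[of "1 - c ^ T" "c ^ T"] assms(6) by auto
  moreover have "a dvd (1 - c ^ T) * prod_list xs"
    if xs: "\<forall>x\<in>set xs. a dvd x - c" and "n \<le> length xs" for xs
  proof -
    have "c ^ length xs = c ^ n * c ^ (length xs - n)"
      using that(2) by (simp flip: power_add)
    moreover have "a dvd c ^ n * (1 - c ^ T) * c ^ (length xs - n)"
      using T(2) by (rule dvd_mult2)
    ultimately have "a dvd (1 - c ^ T) * c ^ length xs"
      by (simp add: ac_simps)
    moreover have "a dvd (1 - c ^ T) * (prod_list xs - c ^ length xs)"
      using dvd_prod_list_diff_power[of xs a c] xs by simp
    ultimately have "a dvd (1 - c ^ T) * (prod_list xs - c ^ length xs) + (1 - c ^ T) * c ^ length xs"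
      by (rule dvd_add[rotated])
    then show ?thesis
      by (simp add: algebra_simps)
  qed
  ultimately show ?thesis
    by blast
qed

lemma finite_residue_classes:
  fixes a :: "'a::comm_ring_1"
  assumes "finite F" "\<forall>x. \<exists>y\<in>F. a dvd x - y" and "x0 \<in> P"
  shows "\<exists>(C::'a set) cls rep. finite C \<and> C \<noteq> {} \<and> (\<forall>x\<in>P. cls x \<in> C \<and> a dvd x - rep (cls x)) \<and>
    (\<forall>y\<in>C. rep y \<in> P)"
proof -
  have "\<forall>x. \<exists>y. y \<in> F \<and> a dvd x - y"
    using assms(2) by blast
  then obtain cls where cls: "\<And>x. cls x \<in> F \<and> a dvd x - cls x"
    by metis
  define C where "C = cls ` P"
  have "C \<subseteq> F" "cls x0 \<in> C"
    using cls assms(3) by (auto simp: C_def)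
  then have C: "finite C" "C \<noteq> {}"
    using assms(1) finite_subset by auto
  have "\<forall>y. \<exists>x. y \<in> C \<longrightarrow> x \<in> P \<and> cls x = y"
    unfolding C_def by blast
  then obtain rep where rep: "\<And>y. y \<in> C \<Longrightarrow> rep y \<in> P \<and> cls (rep y) = y"
    by metis
  have "cls x \<in> C \<and> a dvd x - rep (cls x)" if "x \<in> P" for x
  proof -
    have "cls x \<in> C"
      using that by (simp add: C_def)
    moreover from this have "x - rep (cls x) = (x - cls x) - (rep (cls x) - cls (rep (cls x)))"
      using rep by simp
    ultimately show ?thesis
      using cls by (metis dvd_diff)
  qed
  moreover have "\<forall>y\<in>C. rep y \<in> P"
    using rep by blast
  ultimately show ?thesis
    using C by (intro exI[of _ C] exI[of _ cls] exI[of _ rep]) simp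
qed

text \<open>If \<open>A/aA\<close> is finite and \<open>P\<close> is a prime ideal, then \<open>\<beta> P\<^sup>k \<subseteq> aA\<close> for some \<open>k\<close> and some
  \<open>\<beta> \<notin> P\<close>: apply \<open>congruence_class_annihilator\<close> to each of the finitely many classes of \<open>P\<close> modulo \<open>a\<close>;
  by pigeonhole, a product of \<open>k = \<Sum> n\<^sub>c\<close> elements of \<open>P\<close> contains \<open>n\<^sub>c\<close> elements of one class.\<close>

lemma ideal_pow_dvd_mult_nonmember:
  fixes a :: "'a::comm_ring_1" and P :: "'a set"
  assumes F: "finite F" "\<forall>x. \<exists>y\<in>F. a dvd x - y"
    and P0: "0 \<in> P" and Padd: "\<And>x y. x \<in> P \<Longrightarrow> y \<in> P \<Longrightarrow> x + y \<in> P"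
    and Pmult: "\<And>x y. x \<in> P \<Longrightarrow> x * y \<in> P"
    and Pprime: "\<And>x y. x * y \<in> P \<Longrightarrow> x \<in> P \<or> y \<in> P" and P1: "1 \<notin> P"
  shows "\<exists>k \<beta>. \<beta> \<notin> P \<and> (\<forall>w\<in>ideal_pow P k. a dvd \<beta> * w)"
proof -
  obtain C :: "'a set" and cls rep where C: "finite C" "C \<noteq> {}"
    and classes: "\<forall>x\<in>P. cls x \<in> C \<and> a dvd x - rep (cls x)" and rep: "\<forall>y\<in>C. rep y \<in> P"
    using finite_residue_classes[OF F P0] by blast
  have "\<forall>y\<in>C. \<exists>n \<gamma>. \<gamma> \<notin> P \<and> (\<forall>xs. (\<forall>x\<in>set xs. a dvd x - rep y) \<longrightarrow>
      n \<le> length xs \<longrightarrow> a dvd \<gamma> * prod_list xs)"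
    using congruence_class_annihilator[OF F _ Padd Pmult P1] rep by blast
  then obtain n \<gamma> where n\<gamma>: "\<forall>y\<in>C. \<gamma> y \<notin> P \<and> (\<forall>xs. (\<forall>x\<in>set xs. a dvd x - rep y) \<longrightarrow>
      n y \<le> length xs \<longrightarrow> a dvd \<gamma> y * prod_list xs)"
    by (auto dest!: bchoice)
  define \<beta> where "\<beta> = (\<Prod>y\<in>C. \<gamma> y)"
  have "\<beta> \<notin> P"
    unfolding \<beta>_def using C(1) n\<gamma> P1 Pprime by (intro prod_notin_prime_ideal) auto
  moreover have "a dvd \<beta> * prod_list xs" if xs: "set xs \<subseteq> P" "length xs = (\<Sum>y\<in>C. n y)" for xs
  proof -
    obtain y0 where y0: "y0 \<in> C" "n y0 \<le> length (filter (\<lambda>x. cls x = y0) xs)"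
      using exists_length_filter_ge[OF C, of xs cls n] xs classes by blast
    have "\<forall>x\<in>set (filter (\<lambda>x. cls x = y0) xs). a dvd x - rep y0"
      using xs(1) classes by auto
    then have "a dvd \<gamma> y0 * prod_list (filter (\<lambda>x. cls x = y0) xs)"
      using conjunct2[OF bspec[OF n\<gamma> y0(1)]] y0(2) by simp
    then have "a dvd \<gamma> y0 * prod_list (filter (\<lambda>x. cls x = y0) xs) *
        ((\<Prod>y\<in>C - {y0}. \<gamma> y) * prod_list (filter (\<lambda>x. cls x \<noteq> y0) xs))"
      by (rule dvd_mult2)
    moreover have "\<beta> * prod_list xs = \<gamma> y0 * prod_list (filter (\<lambda>x. cls x = y0) xs) *
        ((\<Prod>y\<in>C - {y0}. \<gamma> y) * prod_list (filter (\<lambda>x. cls x \<noteq> y0) xs))"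
      unfolding \<beta>_def prod_list_filter_split[of xs "\<lambda>x. cls x = y0"]
      using y0(1) C(1) by (simp add: prod.remove ac_simps)
    ultimately show ?thesis
      by simp
  qed
  ultimately show ?thesis
    using dvd_mult_ideal_pow by blast
qed

section \<open>Endomorphisms of a Drinfeld module with good reduction\<close>

locale drinfeld_good_reduction = residue_field v red
  for v :: "'l::field \<Rightarrow> 'g::linordered_ab_group_add" and red :: "'l \<Rightarrow> 'k::field" +
  fixes p :: nat and \<phi> :: "'a::idom \<Rightarrow> 'l poly" and y :: 'l
  assumes prime_p: "prime p" and CHAR_l: "CHAR('l) = p"
    and drinfeld: "drinfeld_module p \<phi>" and good_reduction: "good_reduction_via p \<phi> v y"
begin

lemma p_ge_2: "p \<ge> 2" and p_gt_0: "p > 0"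
  using prime_ge_2_nat[OF prime_p] by simp_all

lemma CHAR_k: "CHAR('k) = p"
  using CHAR_residue_field[OF CHAR_l prime_p] .

lemma y_nonzero: "y \<noteq> 0"
  using good_reduction by (simp add: good_reduction_via_def)

lemma phi_add: "\<phi> (a + b) = \<phi> a + \<phi> b"
  and phi_mult: "\<phi> (a * b) = tmult p (\<phi> a) (\<phi> b)"
  using drinfeld by (simp_all add: drinfeld_module_def)

lemma phi_0: "\<phi> 0 = 0"
proof -
  have "\<phi> 0 + \<phi> 0 = \<phi> 0 + 0"
    using phi_add[of 0 0] by simp
  then show ?thesis
    by (simp only: add_left_cancel)
qed

lemma phi_mem_End: "\<phi> c \<in> End p \<phi>"
  using phi_mult[of c] phi_mult[of _ c] by (simp add: End_def mult.commute)

definition \<psi> :: "'a \<Rightarrow> 'l poly" where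
  "\<psi> a = conj_tp p y (\<phi> a)"

definition \<phi>\<^sub>v :: "'a \<Rightarrow> 'k poly" where
  "\<phi>\<^sub>v a = map_poly red (\<psi> a)"

lemma reduction_eq: "reduction p red y \<phi> = \<phi>\<^sub>v"
  by (rule ext) (simp add: reduction_def reduce_def \<phi>\<^sub>v_def \<psi>_def)

lemma reduce_eq: "reduce p red y f = map_poly red (conj_tp p y f)"
  by (simp add: reduce_def)

lemma in_val_ring_poly_\<psi>: "in_val_ring_poly v (\<psi> a)"
  using good_reduction by (simp add: good_reduction_via_def \<psi>_def)

lemma lead_coeff_\<psi>: "a \<noteq> 0 \<Longrightarrow> lead_coeff (\<psi> a) \<noteq> 0 \<and> v (lead_coeff (\<psi> a)) = 0"
  using good_reduction by (simp add: good_reduction_via_def \<psi>_def)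

lemma conj_tp_tmult': "conj_tp p y (tmult p f g) = tmult p (conj_tp p y f) (conj_tp p y g)"
  using conj_tp_tmult[OF CHAR_l prime_p y_nonzero] .

lemma \<psi>_mult: "\<psi> (a * b) = tmult p (\<psi> a) (\<psi> b)"
  by (simp add: \<psi>_def phi_mult conj_tp_tmult')

lemma \<phi>\<^sub>v_add: "\<phi>\<^sub>v (a + b) = \<phi>\<^sub>v a + \<phi>\<^sub>v b"
  by (simp add: \<phi>\<^sub>v_def \<psi>_def phi_add conj_tp_add[OF p_gt_0] map_poly_red_add in_val_ring_poly_\<psi>[unfolded \<psi>_def])

lemma \<phi>\<^sub>v_mult: "\<phi>\<^sub>v (a * b) = tmult p (\<phi>\<^sub>v a) (\<phi>\<^sub>v b)"
  by (simp add: \<phi>\<^sub>v_def \<psi>_mult map_poly_red_tmult[OF p_gt_0] in_val_ring_poly_\<psi>)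

lemma \<phi>\<^sub>v_0: "\<phi>\<^sub>v 0 = 0"
proof -
  have "\<phi>\<^sub>v 0 + \<phi>\<^sub>v 0 = \<phi>\<^sub>v 0 + 0"
    using \<phi>\<^sub>v_add[of 0 0] by simp
  then show ?thesis
    by (simp only: add_left_cancel)
qed

lemma \<phi>\<^sub>v_1: "\<phi>\<^sub>v 1 = 1"
  using drinfeld by (simp add: \<phi>\<^sub>v_def \<psi>_def drinfeld_module_def conj_tp_1[OF p_gt_0 y_nonzero])

lemma \<phi>\<^sub>v_mem_End: "\<phi>\<^sub>v c \<in> End p \<phi>\<^sub>v"
  using \<phi>\<^sub>v_mult[of c] \<phi>\<^sub>v_mult[of _ c] by (simp add: End_def mult.commute)

lemma End_iff_commutes_\<psi>:
  "f \<in> End p \<phi> \<longleftrightarrow> (\<forall>a. tmult p (conj_tp p y f) (\<psi> a) = tmult p (\<psi> a) (conj_tp p y f))"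
proof -
  have "tmult p f (\<phi> a) = tmult p (\<phi> a) f \<longleftrightarrow>
      tmult p (conj_tp p y f) (\<psi> a) = tmult p (\<psi> a) (conj_tp p y f)" for a
    by (simp add: \<psi>_def conj_tp_tmult'[symmetric] conj_tp_inj[OF p_gt_0 y_nonzero])
  then show ?thesis
    by (simp add: End_def)
qed

lemma exists_\<psi>_positive_degree: "\<exists>a. a \<noteq> 0 \<and> degree (\<psi> a) \<ge> 1"
proof -
  obtain a where "degree (\<phi> a) > 0"
    using drinfeld by (auto simp: drinfeld_module_def)
  moreover from this have "a \<noteq> 0"
    using phi_0 by auto
  ultimately show ?thesis
    by (auto simp: \<psi>_def degree_conj_tp[OF p_gt_0 y_nonzero])
qed

lemma integral_conj_End:
  assumes "f \<in> End p \<phi>"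
  shows "in_val_ring_poly v (conj_tp p y f)"
proof -
  obtain a where "a \<noteq> 0" "degree (\<psi> a) \<ge> 1"
    using exists_\<psi>_positive_degree by blast
  then show ?thesis
    using lead_coeff_\<psi> assms End_iff_commutes_\<psi>
    by (intro in_val_ring_poly_if_commutes[OF p_ge_2 in_val_ring_poly_\<psi>]) auto
qed

lemma reduce_mem_End:
  assumes "f \<in> End p \<phi>"
  shows "reduce p red y f \<in> End p \<phi>\<^sub>v"
  unfolding End_def
proof (intro CollectI allI)
  fix a
  have "tmult p (conj_tp p y f) (\<psi> a) = tmult p (\<psi> a) (conj_tp p y f)"
    using assms End_iff_commutes_\<psi> by blast
  then show "tmult p (reduce p red y f) (\<phi>\<^sub>v a) = tmult p (\<phi>\<^sub>v a) (reduce p red y f)"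
    using integral_conj_End[OF assms] in_val_ring_poly_\<psi>
    by (simp add: reduce_eq \<phi>\<^sub>v_def flip: map_poly_red_tmult[OF p_gt_0])
qed

lemma reduce_tmult_\<phi>:
  "f \<in> End p \<phi> \<Longrightarrow> reduce p red y (tmult p (\<phi> c) f) = tmult p (\<phi>\<^sub>v c) (reduce p red y f)"
  by (simp add: reduce_eq conj_tp_tmult' \<phi>\<^sub>v_def \<psi>_def[symmetric] map_poly_red_tmult[OF p_gt_0]
      in_val_ring_poly_\<psi> integral_conj_End)

lemma inj_on_reduce: "inj_on (reduce p red y) (End p \<phi>)"
proof (rule inj_onI)
  fix f1 f2
  assume f: "f1 \<in> End p \<phi>" "f2 \<in> End p \<phi>" and eq: "reduce p red y f1 = reduce p red y f2"
  define h where "h = conj_tp p y f1 - conj_tp p y f2"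
  have "in_val_ideal_poly v h"
    using eq integral_conj_End[OF f(1)] integral_conj_End[OF f(2)]
    by (simp add: h_def reduce_eq in_val_ideal_poly_iff in_val_ring_poly_diff map_poly_red_diff)
  moreover obtain a where a: "a \<noteq> 0" "degree (\<psi> a) \<ge> 1"
    using exists_\<psi>_positive_degree by blast
  moreover have "tmult p h (\<psi> a) = tmult p (\<psi> a) h"
    using f End_iff_commutes_\<psi>
    by (simp add: h_def tmult_diff_left[OF p_gt_0] tmult_diff_right[OF CHAR_l prime_p])
  ultimately have "h = 0"
    using lead_coeff_\<psi> by (intro commuting_in_val_ideal_poly_eq_0[OF p_ge_2 in_val_ring_poly_\<psi>]) auto
  then show "f1 = f2"
    by (simp add: h_def conj_tp_inj[OF p_gt_0 y_nonzero])
qed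

lemma \<phi>\<^sub>v_ne_0:
  assumes "b \<noteq> 0"
  shows "\<phi>\<^sub>v b \<noteq> 0" and "degree (\<phi>\<^sub>v b) = degree (\<psi> b)"
proof -
  have "red (lead_coeff (\<psi> b)) \<noteq> 0"
    using lead_coeff_\<psi>[OF assms] val_unit_iff red_eq_0_iff in_val_ring_poly_coeff[OF in_val_ring_poly_\<psi>]
    by blast
  then have "coeff (\<phi>\<^sub>v b) (degree (\<psi> b)) \<noteq> 0"
    by (simp add: \<phi>\<^sub>v_def coeff_map_poly)
  then show "\<phi>\<^sub>v b \<noteq> 0"
    by auto
  show "degree (\<phi>\<^sub>v b) = degree (\<psi> b)"
    using lead_coeff_\<psi>[OF assms] by (simp add: \<phi>\<^sub>v_def degree_map_poly_red)
qed

lemma coeff_0_\<psi>_unit: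
  assumes "b \<notin> char_ideal \<phi>\<^sub>v"
  shows "b \<noteq> 0" and "coeff (\<psi> b) 0 \<noteq> 0" and "v (coeff (\<psi> b) 0) = 0"
proof -
  show "b \<noteq> 0"
    using assms \<phi>\<^sub>v_0 by (auto simp: char_ideal_def)
  have "red (coeff (\<psi> b) 0) \<noteq> 0"
    using assms by (simp add: char_ideal_def \<phi>\<^sub>v_def coeff_map_poly)
  then show "coeff (\<psi> b) 0 \<noteq> 0" "v (coeff (\<psi> b) 0) = 0"
    using val_unit_iff red_eq_0_iff in_val_ring_poly_coeff[OF in_val_ring_poly_\<psi>] by blast+
qed

text \<open>Divide \<open>y\<^sup>-\<^sup>1 f y = q \<psi>\<^sub>b + r\<close>; reduction identifies \<open>q\<close> with a lift of \<open>x\<close> and forces \<open>r\<close> into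
  the maximal ideal, and then \<open>r = 0\<close> because \<open>\<psi>\<^sub>b\<close> has a unit constant term.\<close>

lemma reduce_image_saturated:
  assumes b: "b \<notin> char_ideal \<phi>\<^sub>v" and x: "x \<in> End p \<phi>\<^sub>v" and f: "f \<in> End p \<phi>"
    and fx: "reduce p red y f = tmult p (\<phi>\<^sub>v b) x"
  shows "x \<in> reduce p red y ` End p \<phi>"
proof -
  define B where "B = \<psi> b"
  have "b \<noteq> 0" and B0: "coeff B 0 \<noteq> 0" "v (coeff B 0) = 0"
    using coeff_0_\<psi>_unit[OF b] by (simp_all add: B_def)
  then have B: "in_val_ring_poly v B" "B \<noteq> 0" "lead_coeff B \<noteq> 0" "v (lead_coeff B) = 0"
    using lead_coeff_\<psi> in_val_ring_poly_\<psi> by (auto simp: B_def)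
  obtain q r where qr: "in_val_ring_poly v q" "in_val_ring_poly v r"
      "conj_tp p y f = tmult p q B + r" "r = 0 \<or> degree r < degree B"
    using tmult_division[OF p_gt_0 B(1,3,4) integral_conj_End[OF f]] by (elim exE conjE)
  have "tmult p x (\<phi>\<^sub>v b) = tmult p (\<phi>\<^sub>v b) x"
    using x by (simp add: End_def)
  then have eq: "tmult p (map_poly red q) (\<phi>\<^sub>v b) + map_poly red r = tmult p x (\<phi>\<^sub>v b) + 0"
    using fx qr(1,2) B(1) unfolding reduce_eq qr(3) \<phi>\<^sub>v_def B_def[symmetric]
    by (simp add: map_poly_red_add map_poly_red_tmult[OF p_gt_0] in_val_ring_poly_tmult[OF p_gt_0])
  moreover have "map_poly red r = 0 \<or> degree (map_poly red r) < degree (\<phi>\<^sub>v b)"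
    using qr(4) map_poly_degree_leq[of red r] \<phi>\<^sub>v_ne_0(2)[OF \<open>b \<noteq> 0\<close>] by (auto simp: B_def)
  ultimately have red_q: "map_poly red q = x"
    using tmult_division_unique[OF p_gt_0 \<phi>\<^sub>v_ne_0(1)[OF \<open>b \<noteq> 0\<close>]] by blast
  then have "map_poly red r = 0"
    using eq by simp
  then have "in_val_ideal_poly v r"
    using in_val_ideal_poly_iff[OF qr(2)] by simp
  moreover have "tmult p (conj_tp p y f) B = tmult p B (conj_tp p y f)"
    using f End_iff_commutes_\<psi> by (simp add: B_def)
  ultimately have "r = 0"
    using commuting_remainder_eq_0[OF CHAR_l prime_p B(1,2,4) B0 _ qr(3) _ qr(4)] by blast
  have "tmult p q (\<psi> c) = tmult p (\<psi> c) q" for c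
  proof (rule tmult_commute_cancel_right[OF CHAR_l prime_p B(2)])
    show "tmult p B (\<psi> c) = tmult p (\<psi> c) B"
      unfolding B_def \<psi>_mult[symmetric] by (simp add: mult.commute)
    have "tmult p (conj_tp p y f) (\<psi> c) = tmult p (\<psi> c) (conj_tp p y f)"
      using f End_iff_commutes_\<psi> by blast
    then show "tmult p (tmult p q B) (\<psi> c) = tmult p (\<psi> c) (tmult p q B)"
      using qr(3) \<open>r = 0\<close> by simp
  qed
  then have "conj_tp p (inverse y) q \<in> End p \<phi>"
    by (simp add: End_iff_commutes_\<psi> conj_tp_conj_tp_inverse[OF p_gt_0 y_nonzero])
  moreover have "reduce p red y (conj_tp p (inverse y) q) = x"
    using red_q by (simp add: reduce_eq conj_tp_conj_tp_inverse[OF p_gt_0 y_nonzero])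
  ultimately show ?thesis
    by blast
qed

lemma char_ideal_prime:
  shows "0 \<in> char_ideal \<phi>\<^sub>v" and "1 \<notin> char_ideal \<phi>\<^sub>v"
    and "a \<in> char_ideal \<phi>\<^sub>v \<Longrightarrow> b \<in> char_ideal \<phi>\<^sub>v \<Longrightarrow> a + b \<in> char_ideal \<phi>\<^sub>v"
    and "a \<in> char_ideal \<phi>\<^sub>v \<Longrightarrow> a * b \<in> char_ideal \<phi>\<^sub>v"
    and "a * b \<in> char_ideal \<phi>\<^sub>v \<Longrightarrow> a \<in> char_ideal \<phi>\<^sub>v \<or> b \<in> char_ideal \<phi>\<^sub>v"
  by (simp_all add: char_ideal_def \<phi>\<^sub>v_0 \<phi>\<^sub>v_1 \<phi>\<^sub>v_add \<phi>\<^sub>v_mult coeff_0_tmult[OF p_gt_0])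

text \<open>Since \<open>A/aA\<close> is finite, \<open>\<beta> \<frak>p\<^sub>v\<^sup>k \<subseteq> aA\<close> for some \<open>\<beta> \<notin> \<frak>p\<^sub>v\<close>; multiplication by \<open>\<phi>\<^sub>v\<^sub>,\<^sub>\<beta>\<close> is then
  undone by the saturation of the image.\<close>

lemma reduce_cokernel_torsion:
  assumes "admissible_coeff_ring TYPE('a)" "CHAR('a) = p"
    and x: "x \<in> End p \<phi>\<^sub>v" and "a \<noteq> 0" and ax: "tmult p (\<phi>\<^sub>v a) x \<in> reduce p red y ` End p \<phi>"
  shows "\<exists>k. \<forall>b\<in>ideal_pow (char_ideal \<phi>\<^sub>v) k. tmult p (\<phi>\<^sub>v b) x \<in> reduce p red y ` End p \<phi>"
proof -
  have "prime CHAR('a)"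
    using assms(2) prime_p by simp
  obtain t :: 'a and bs :: "'a list" where gen: "\<forall>z::'a. \<exists>q. (\<forall>j<length bs. q j \<in> prime_poly_subring t) \<and>
      z = (\<Sum>j<length bs. q j * bs ! j)"
    using assms(1) unfolding admissible_coeff_ring_def by (elim conjE exE)
  obtain F where F: "finite F" "\<forall>z. \<exists>w\<in>F. a dvd z - w"
    using finite_residues[OF \<open>prime CHAR('a)\<close> assms(4) gen] by (elim exE conjE)
  have "\<exists>k \<beta>. \<beta> \<notin> char_ideal \<phi>\<^sub>v \<and> (\<forall>w\<in>ideal_pow (char_ideal \<phi>\<^sub>v) k. a dvd \<beta> * w)"
    by (rule ideal_pow_dvd_mult_nonmember[OF F]) (simp_all add: char_ideal_prime)
  then obtain k \<beta> where \<beta>: "\<beta> \<notin> char_ideal \<phi>\<^sub>v" "\<forall>w\<in>ideal_pow (char_ideal \<phi>\<^sub>v) k. a dvd \<beta> * w"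
    by (elim exE conjE)
  from ax obtain f where f: "tmult p (\<phi>\<^sub>v a) x = reduce p red y f" "f \<in> End p \<phi>"
    by (rule imageE)
  have "tmult p (\<phi>\<^sub>v w) x \<in> reduce p red y ` End p \<phi>" if "w \<in> ideal_pow (char_ideal \<phi>\<^sub>v) k" for w
  proof -
    from \<beta>(2) that have "a dvd \<beta> * w"
      by blast
    then obtain c where c: "\<beta> * w = a * c"
      by (rule dvdE)
    have "tmult p (\<phi>\<^sub>v \<beta>) (tmult p (\<phi>\<^sub>v w) x) = tmult p (\<phi>\<^sub>v (\<beta> * w)) x"
      by (simp add: \<phi>\<^sub>v_mult tmult_assoc[OF CHAR_k prime_p])
    also have "\<dots> = tmult p (\<phi>\<^sub>v c) (tmult p (\<phi>\<^sub>v a) x)"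
      unfolding c mult.commute[of a c] \<phi>\<^sub>v_mult tmult_assoc[OF CHAR_k prime_p] ..
    also have "\<dots> = reduce p red y (tmult p (\<phi> c) f)"
      using f by (simp add: reduce_tmult_\<phi>)
    finally show ?thesis
      using reduce_image_saturated[OF \<beta>(1) tmult_mem_End[OF CHAR_k prime_p \<phi>\<^sub>v_mem_End x]
          tmult_mem_End[OF CHAR_l prime_p phi_mem_End f(2)]]
      by simp
  qed
  then show ?thesis
    by (intro exI[of _ k] ballI)
qed

end

theorem proposition7p1:
  fixes p :: nat
    and \<phi> :: "'a::idom \<Rightarrow> 'l::field poly"
    and v :: "'l \<Rightarrow> 'g::linordered_ab_group_add"
    and red :: "'l \<Rightarrow> 'k::field"
    and y :: 'l
  assumes "admissible_coeff_ring TYPE('a)"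
    and "CHAR('a) = p" and "CHAR('l) = p"
    and "drinfeld_module p \<phi>"
    and "valuation v"
    and "residue_map v red"
    and "good_reduction_via p \<phi> v y"
  shows "(\<forall>f\<in>End p \<phi>. in_val_ring_poly v (conj_tp p y f) \<and>
            reduce p red y f \<in> End p (reduction p red y \<phi>))
    \<and> inj_on (reduce p red y) (End p \<phi>)
    \<and> (\<forall>x\<in>End p (reduction p red y \<phi>).
          (\<exists>a. a \<noteq> 0 \<and> tmult p (reduction p red y \<phi> a) x \<in> reduce p red y ` End p \<phi>)
          \<longrightarrow> (\<exists>k. \<forall>b\<in>ideal_pow (char_ideal (reduction p red y \<phi>)) k.
                  tmult p (reduction p red y \<phi> b) x \<in> reduce p red y ` End p \<phi>))"
proof -
  have "prime p"
    using assms(1,2) by (simp add: admissible_coeff_ring_def)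
  with assms interpret drinfeld_good_reduction v red p \<phi> y
    by unfold_locales simp_all
  show ?thesis
    unfolding reduction_eq
    using integral_conj_End reduce_mem_End inj_on_reduce reduce_cokernel_torsion[OF assms(1,2)]
    by blast
qed

end
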